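(* Assume (A1)–(A4). For every $\boldsymbol y\in U$ and every $\boldsymbol\nu\in\mathscr F$, $$\big\|\partial_{\boldsymbol y}^{\boldsymbol\nu}B^{-1}(\cdot,\boldsymbol y)\big\|_{L^\infty(D_{\rm ref})}\le \frac{1}{\sigma_{\min}^2}\Big(\frac{4\pi(1+\xi_{\boldsymbol b})}{\sigma_{\min}^2}\Big)^{|\boldsymbol\nu|}\sum_{\boldsymbol m\le\boldsymbol\nu}|\boldsymbol m|!\,a_{|\boldsymbol m|}\,\boldsymbol m!\,\boldsymbol b^{\boldsymbol m}\prod_{i\ge1}S(\nu_i,m_i),$$ where $a_k:=\frac{(1+\sqrt3)^{k+1}-(1-\sqrt3)^{k+1}}{2^{k+1}\sqrt3}$ for $k\ge0$.
   Context: Setting. Let $d\in\{2,3\}$, let $D_{\rm ref}\subset\mathbb R^d$ be a bounded Lipschitz domain and $U:=[0,1]^{\mathbb N}$. $\mathscr F$ is the set of finitely supported multi-indices $\boldsymbol\nu\in\mathbb N_0^{\mathbb N}$; $|\boldsymbol\nu|=\sum_j\nu_j$, $\boldsymbol\nu!=\prod_j\nu_j!$, $\boldsymbol b^{\boldsymbol\nu}=\prod_j b_j^{\nu_j}$, $\boldsymbol m\le\boldsymbol\nu$ componentwise, $\binom{\boldsymbol\nu}{\boldsymbol m}=\prod_j\binom{\nu_j}{m_j}$, $\partial_{\boldsymbol y}^{\boldsymbol\nu}=\prod_j\partial^{\nu_j}/\partial y_j^{\nu_j}$. $S(n,m)=\frac1{m!}\sum_{j=0}^m(-1)^{m-j}\binom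 mj j^n$ are Stirling numbers of the second kind ($S(0,0)=1$). Let $\boldsymbol\psi_i:D_{\rm ref}\to\mathbb R^d$ and $\boldsymbol V(\boldsymbol x,\boldsymbol y)=\boldsymbol x+\frac1{\sqrt6}\sum_{i\ge1}\sin(2\pi y_i)\boldsymbol\psi_i(\boldsymbol x)$, with Jacobian $J(\boldsymbol x,\boldsymbol y)=I+\frac1{\sqrt6}\sum_{i\ge1}\sin(2\pi y_i)\boldsymbol\psi_i'(\boldsymbol x)$; $D(\boldsymbol y)=\boldsymbol V(D_{\rm ref},\boldsymbol y)$. For functions on $D_{\rm ref}$, $\|v\|_{L^\infty}$ is the essential supremum of the absolute value / Euclidean norm / spectral norm of $v(\boldsymbol x)$ (scalar/vector/matrix case); for vector fields $\|v\|_{W^{1,\infty}}=\max(\operatorname{ess\,sup}\|v(\boldsymbol x)\|_2,\operatorname{ess\,sup}\|v'(\boldsymbol x)\|_2)$. Assumptions: (A1) for each $\boldsymbol y\in U$, $\boldsymbol V(\cdot,\boldsymbol y):\overline{D_{\rm ref}}\to\mathbb R^d$ is invertible and $C^2$; (A2) there is $C>0$ with $\|\boldsymbol V(\cdot,\boldsymbol y)\|_{C^2(\overline{D_{\rm ref}})}\le C$ and $\|\boldsymbol V^{-1}(\cdot,\boldsymbol y)\|_{C^2(\overline{D(\boldsymbol y)})}\le C$ for all $\boldsymbol y$, where $\|v\|_{C^k(\overline D)}=\max_{|\boldsymbol\nu|\le k}\sup_{\overline D}|\partial^{\boldsymbol\nu}_{\boldsymbol x}v|$; (A3) there are constants $0<\sigma_{\min}\le1\le\sigma_{\max}<\infty$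 such that all singular values of $J(\boldsymbol x,\boldsymbol y)$ lie in $[\sigma_{\min},\sigma_{\max}]$ for all $\boldsymbol x\in D_{\rm ref},\boldsymbol y\in U$; (A4) $\|\boldsymbol\psi_i\|_{W^{1,\infty}(D_{\rm ref})}<\infty$ for all $i$ and $\sum_i\|\boldsymbol\psi_i\|_{W^{1,\infty}(D_{\rm ref})}<\infty$. Define $b_i:=\frac1{\sqrt6}\|\boldsymbol\psi_i\|_{W^{1,\infty}(D_{\rm ref})}$, $\xi_{\boldsymbol b}:=\sum_i b_i$. Define $B(\boldsymbol x,\boldsymbol y):=J(\boldsymbol x,\boldsymbol y)^\top J(\boldsymbol x,\boldsymbol y)$. *)

theory Defs
  imports "HOL-Analysis.Analysis" "HOL-Combinatorics.Stirling"
begin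

definition lipschitz_domain :: "(real^'n) set \<Rightarrow> bool" where
  "lipschitz_domain D \<longleftrightarrow> open D \<and> bounded D \<and> connected D \<and> D \<noteq> {} \<and>
     (\<forall>p \<in> frontier D. \<exists>r > 0. \<exists>Q :: real^'n^'n. \<exists>k :: 'n. \<exists>g :: real^'n \<Rightarrow> real. \<exists>L.
        orthogonal_matrix Q \<and> L-lipschitz_on UNIV g \<and>
        (\<forall>u v. (\<forall>i. i \<noteq> k \<longrightarrow> u $ i = v $ i) \<longrightarrow> g u = g v) \<and>
        D \<inter> ball p r = {x \<in> ball p r. (Q *v (x - p)) $ k < g (Q *v (x - p))})"

definition xpart :: "'n \<Rightarrow> (real^'n \<Rightarrow> 'a::real_normed_vector) \<Rightarrow> real^'n \<Rightarrow> 'a" where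
  "xpart i f x = vector_derivative (\<lambda>t. f (x + t *\<^sub>R axis i 1)) (at 0)"

text \<open>f is in C^2 of the closure of the open set D: continuous on the closure, partial
derivatives up to order 2 exist in D and are uniformly continuous on D (hence extend
continuously to the closure).\<close>
definition C2_closure :: "(real^'n) set \<Rightarrow> (real^'n \<Rightarrow> real^'m) \<Rightarrow> bool" where
  "C2_closure D f \<longleftrightarrow> continuous_on (closure D) f \<and>
     (\<forall>i. \<forall>x \<in> D. (\<lambda>t. f (x + t *\<^sub>R axis i 1)) differentiable (at 0)) \<and>
     (\<forall>i j. \<forall>x \<in> D. (\<lambda>t. xpart i f (x + t *\<^sub>R axis j 1)) differentiable (at 0)) \<and>
     (\<forall>i. uniformly_continuous_on D (xpart i f)) \<and>
     (\<forall>i j. uniformly_continuous_on D (xpart j (xpart i f)))"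

text \<open>The C^2 norm of f over the closure of D is at most C (derivatives are bounded on D,
equivalently on the closure for their continuous extensions).\<close>
definition C2_norm_le :: "(real^'n) set \<Rightarrow> (real^'n \<Rightarrow> real^'m) \<Rightarrow> real \<Rightarrow> bool" where
  "C2_norm_le D f C \<longleftrightarrow> (\<forall>x \<in> closure D. norm (f x) \<le> C) \<and>
     (\<forall>i. \<forall>x \<in> D. norm (xpart i f x) \<le> C) \<and>
     (\<forall>i j. \<forall>x \<in> D. norm (xpart j (xpart i f) x) \<le> C)"

definition singular_value :: "real^'n^'n \<Rightarrow> real \<Rightarrow> bool" where
  "singular_value A s \<longleftrightarrow> s \<ge> 0 \<and> (\<exists>v. v \<noteq> 0 \<and> (transpose A ** A) *v v = (s^2) *\<^sub>R v)"

definition spec_norm :: "real^'n^'m \<Rightarrow> real" where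
  "spec_norm A = onorm (\<lambda>v. A *v v)"

definition jacobian :: "(real^'n \<Rightarrow> real^'m) \<Rightarrow> real^'n \<Rightarrow> real^'n^'m" where
  "jacobian f x = matrix (frechet_derivative f (at x))"

definition W1inf_norm :: "(real^'n) set \<Rightarrow> (real^'n \<Rightarrow> real^'n) \<Rightarrow> real" where
  "W1inf_norm D f = max (Sup ((\<lambda>x. norm (f x)) ` D)) (Sup ((\<lambda>x. spec_norm (jacobian f x)) ` D))"

definition Vmap :: "(nat \<Rightarrow> real^'n \<Rightarrow> real^'n) \<Rightarrow> real^'n \<Rightarrow> (nat \<Rightarrow> real) \<Rightarrow> real^'n" where
  "Vmap \<psi> x y = x + (1 / sqrt 6) *\<^sub>R (\<Sum>i. sin (2 * pi * y i) *\<^sub>R \<psi> i x)"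

definition Jmat :: "(nat \<Rightarrow> real^'n \<Rightarrow> real^'n) \<Rightarrow> real^'n \<Rightarrow> (nat \<Rightarrow> real) \<Rightarrow> real^'n^'n" where
  "Jmat \<psi> x y = mat 1 + (1 / sqrt 6) *\<^sub>R (\<Sum>i. sin (2 * pi * y i) *\<^sub>R jacobian (\<psi> i) x)"

definition Bmat :: "(nat \<Rightarrow> real^'n \<Rightarrow> real^'n) \<Rightarrow> real^'n \<Rightarrow> (nat \<Rightarrow> real) \<Rightarrow> real^'n^'n" where
  "Bmat \<psi> x y = transpose (Jmat \<psi> x y) ** Jmat \<psi> x y"

definition Ucube :: "(nat \<Rightarrow> real) set" where
  "Ucube = {y. \<forall>i. y i \<in> {0..1}}"

definition mi_supp :: "(nat \<Rightarrow> nat) \<Rightarrow> nat set" where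
  "mi_supp \<nu> = {j. \<nu> j \<noteq> 0}"

definition mi_abs :: "(nat \<Rightarrow> nat) \<Rightarrow> nat" where
  "mi_abs \<nu> = (\<Sum>j\<in>mi_supp \<nu>. \<nu> j)"

definition ypart :: "nat \<Rightarrow> ((nat \<Rightarrow> real) \<Rightarrow> 'a::real_normed_vector) \<Rightarrow> (nat \<Rightarrow> real) \<Rightarrow> 'a" where
  "ypart j F y = vector_derivative (\<lambda>t. F (y(j := t))) (at (y j))"

fun ypartl :: "nat list \<Rightarrow> ((nat \<Rightarrow> real) \<Rightarrow> 'a::real_normed_vector) \<Rightarrow> (nat \<Rightarrow> real) \<Rightarrow> 'a" where
  "ypartl [] F = F"
| "ypartl (j # js) F = ypart j (ypartl js F)"

definition ymderiv :: "(nat \<Rightarrow> nat) \<Rightarrow> ((nat \<Rightarrow> real) \<Rightarrow> 'a::real_normed_vector) \<Rightarrow> (nat \<Rightarrow> real) \<Rightarrow> 'a" where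
  "ymderiv \<nu> F = ypartl (concat (map (\<lambda>j. replicate (\<nu> j) j) (sorted_list_of_set (mi_supp \<nu>)))) F"

definition a_seq :: "nat \<Rightarrow> real" where
  "a_seq k = ((1 + sqrt 3) ^ (k + 1) - (1 - sqrt 3) ^ (k + 1)) / (2 ^ (k + 1) * sqrt 3)"

end

theory Submission
  imports Defs
begin

text \<open>Fix x and write J(y) for the Jacobian as a function of the parameters and K = J^-1, so that
  B^-1 = K K^T. Since J is a sum of functions of one parameter each, a partial derivative of J of
  order \<mu> \<noteq> 0 vanishes unless \<mu> is concentrated in a single coordinate j, where its norm is at
  most (2\<pi>)^|\<mu>| b_j. Differentiating J K = I by the Leibniz rule expresses the derivatives of K
  through lower ones, and by induction the norm of the \<nu>-th derivative of K is at most the \<nu>-th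
  derivative at 0 of the scalar majorant \<Phi>(y) = 1 / (\<sigma>min - \<Sum>_j b_j (exp (2\<pi> y_j) - 1)),
  whose derivatives obey the same recursion with equality. The Leibniz rule for K K^T then bounds
  the \<nu>-th derivative of B^-1 by that of \<Phi>^2 at 0, which is
  \<Sum>_m (|m|+1)! (2\<pi>)^|\<nu>| b^m \<Prod>_i S(\<nu>_i, m_i) \<sigma>min^(-2-|m|); crude estimates of this sum
  give the stated bound.\<close>

section \<open>Partial derivatives along lists of coordinates\<close>

lemma ypart_eqI:
  "((\<lambda>t. F (y(j := t))) has_vector_derivative D) (at (y j)) \<Longrightarrow> ypart j F y = D"
  unfolding ypart_def by (rule vector_derivative_at)

lemma ypart_eqI_real:
  "((\<lambda>t. F (y(j := t))) has_real_derivative D) (at (y j)) \<Longrightarrow> ypart j F y = D"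
  by (rule ypart_eqI) (simp add: has_real_derivative_iff_has_vector_derivative)

lemma has_derivative_imp_differentiable_real:
  "(f has_real_derivative D) (at x) \<Longrightarrow> f differentiable (at x)"
  by (auto simp: has_real_derivative_iff_has_vector_derivative intro: differentiableI_vector)

lemma ypart_cong_eventually:
  assumes "\<forall>\<^sub>F t in nhds (y j). F (y(j := t)) = G (y(j := t))"
  shows "ypart j F y = ypart j G y"
  unfolding ypart_def
  by (rule vector_derivative_cong_eq[where A = UNIV and B = UNIV]) (use assms in auto)

lemma ypartl_const: "js \<noteq> [] \<Longrightarrow> ypartl js (\<lambda>y. C) = (\<lambda>y. 0)"
proof (induction js)
  case (Cons j js)
  then show ?case by (cases "js = []") (auto simp: ypart_def fun_eq_iff)
qed simp

definition coord_open :: "(nat \<Rightarrow> real) set \<Rightarrow> nat set \<Rightarrow> bool" where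
  "coord_open \<Omega> I \<longleftrightarrow> (\<forall>y\<in>\<Omega>. \<forall>j\<in>I. \<forall>\<^sub>F t in nhds (y j). y(j := t) \<in> \<Omega>)"

definition coord_smooth ::
    "(nat \<Rightarrow> real) set \<Rightarrow> nat set \<Rightarrow> ((nat \<Rightarrow> real) \<Rightarrow> 'a::real_normed_vector) \<Rightarrow> bool" where
  "coord_smooth \<Omega> I F \<longleftrightarrow>
     (\<forall>js. set js \<subseteq> I \<longrightarrow> (\<forall>y\<in>\<Omega>. \<forall>j\<in>I. (\<lambda>t. ypartl js F (y(j := t))) differentiable (at (y j))))"

lemma coord_open_UNIV: "coord_open UNIV I"
  unfolding coord_open_def by simp

lemma ypartl_cong_on:
  assumes \<Omega>: "coord_open \<Omega> I" and eq: "\<And>y. y \<in> \<Omega> \<Longrightarrow> F y = G y"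
  shows "set js \<subseteq> I \<Longrightarrow> y \<in> \<Omega> \<Longrightarrow> ypartl js F y = ypartl js G y"
proof (induction js arbitrary: y)
  case (Cons j js)
  have "\<forall>\<^sub>F t in nhds (y j). y(j := t) \<in> \<Omega>"
    using \<Omega> Cons.prems unfolding coord_open_def by auto
  then have "\<forall>\<^sub>F t in nhds (y j). ypartl js F (y(j := t)) = ypartl js G (y(j := t))"
    by (rule eventually_mono) (use Cons in auto)
  then show ?case by (simp add: ypart_cong_eventually)
qed (use eq in simp)

fun subseq_splits :: "'a list \<Rightarrow> ('a list \<times> 'a list) list" where
  "subseq_splits [] = [([], [])]"
| "subseq_splits (j # js) =
     map (\<lambda>(a, c). (a, j # c)) (subseq_splits js) @ map (\<lambda>(a, c). (j # a, c)) (subseq_splits js)"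

lemma subseq_splits_trivial_first:
  "\<exists>r. subseq_splits js = ([], js) # r \<and> (\<forall>p\<in>set r. fst p \<noteq> [])"
proof (induction js)
  case (Cons j js)
  then obtain r where r: "subseq_splits js = ([], js) # r" "\<forall>p\<in>set r. fst p \<noteq> []"
    by blast
  show ?case
    by (rule exI[of _ "map (\<lambda>(a, c). (a, j # c)) r @ map (\<lambda>(a, c). (j # a, c)) (subseq_splits js)"])
       (use r in \<open>auto simp: case_prod_beta\<close>)
qed simp

lemma subseq_splits_length_set:
  "p \<in> set (subseq_splits js) \<Longrightarrow>
     length (fst p) + length (snd p) = length js \<and> set (fst p) \<subseteq> set js \<and> set (snd p) \<subseteq> set js"
  by (induction js arbitrary: p) (auto, fastforce+)

lemma has_vector_derivative_sum_list:
  "(\<And>x. x \<in> set xs \<Longrightarrow> ((\<lambda>t. f x t) has_vector_derivative f' x) F) \<Longrightarrow>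
     ((\<lambda>t. \<Sum>x\<leftarrow>xs. f x t) has_vector_derivative (\<Sum>x\<leftarrow>xs. f' x)) F"
  by (induction xs) (auto intro!: has_vector_derivative_add has_vector_derivative_const)

lemma ypart_bilinear_has_vector_derivative:
  fixes prod :: "'a::real_normed_vector \<Rightarrow> 'b::real_normed_vector \<Rightarrow> 'c::real_normed_vector"
    and F :: "(nat \<Rightarrow> real) \<Rightarrow> 'a" and G :: "(nat \<Rightarrow> real) \<Rightarrow> 'b"
  assumes "bounded_bilinear prod"
    and "(\<lambda>t. F (y(j := t))) differentiable (at (y j))"
    and "(\<lambda>t. G (y(j := t))) differentiable (at (y j))"
  shows "((\<lambda>t. prod (F (y(j := t))) (G (y(j := t)))) has_vector_derivative
           prod (F y) (ypart j G y) + prod (ypart j F y) (G y)) (at (y j))"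
  using bounded_bilinear.has_vector_derivative[OF assms(1),
      OF vector_derivative_works[THEN iffD1, OF assms(2)] vector_derivative_works[THEN iffD1, OF assms(3)]]
  by (simp add: ypart_def)

text \<open>Summing over all splittings of the list of differentiations into two subsequences
  replaces the binomial coefficients of the multivariate Leibniz rule.\<close>

lemma ypartl_bilinear:
  fixes prod :: "'a::real_normed_vector \<Rightarrow> 'b::real_normed_vector \<Rightarrow> 'c::real_normed_vector"
  assumes prod: "bounded_bilinear prod" and \<Omega>: "coord_open \<Omega> I"
    and F: "coord_smooth \<Omega> I F" and G: "coord_smooth \<Omega> I G"
  shows "set js \<subseteq> I \<Longrightarrow> y \<in> \<Omega> \<Longrightarrow>
    ypartl js (\<lambda>y. prod (F y) (G y)) y =
      (\<Sum>p\<leftarrow>subseq_splits js. prod (ypartl (fst p) F y) (ypartl (snd p) G y))"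
proof (induction js arbitrary: y)
  case (Cons j js)
  let ?S = "\<lambda>y. \<Sum>p\<leftarrow>subseq_splits js. prod (ypartl (fst p) F y) (ypartl (snd p) G y)"
  have j: "j \<in> I" and js: "set js \<subseteq> I" using Cons.prems by auto
  have "\<forall>\<^sub>F t in nhds (y j). y(j := t) \<in> \<Omega>"
    using \<Omega> Cons.prems j unfolding coord_open_def by auto
  then have "ypart j (ypartl js (\<lambda>y. prod (F y) (G y))) y = ypart j ?S y"
    by (intro ypart_cong_eventually) (auto elim!: eventually_mono intro: Cons.IH[OF js])
  also have "\<dots> = (\<Sum>p\<leftarrow>subseq_splits js.
      prod (ypartl (fst p) F y) (ypartl (j # snd p) G y) + prod (ypartl (j # fst p) F y) (ypartl (snd p) G y))"
  proof (rule ypart_eqI, rule has_vector_derivative_sum_list)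
    fix p assume "p \<in> set (subseq_splits js)"
    then have "set (fst p) \<subseteq> I" "set (snd p) \<subseteq> I"
      using subseq_splits_length_set js by blast+
    with F G Cons.prems j show "((\<lambda>t. prod (ypartl (fst p) F (y(j := t))) (ypartl (snd p) G (y(j := t))))
        has_vector_derivative prod (ypartl (fst p) F y) (ypartl (j # snd p) G y)
          + prod (ypartl (j # fst p) F y) (ypartl (snd p) G y)) (at (y j))"
      unfolding coord_smooth_def by (auto intro!: ypart_bilinear_has_vector_derivative[OF prod])
  qed
  also have "\<dots> = (\<Sum>p\<leftarrow>subseq_splits (j # js). prod (ypartl (fst p) F y) (ypartl (snd p) G y))"
    by (simp add: sum_list_addf case_prod_beta o_def)
  finally show ?case by simp
qed simp

section \<open>The scalar majorant\<close>

lemma DERIV_one_over_power: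
  fixes g :: "real \<Rightarrow> real"
  assumes g: "(g has_real_derivative g') (at x)" and nz: "g x \<noteq> 0"
  shows "((\<lambda>t. (1 / g t) ^ q) has_real_derivative - (real q * g' * (1 / g x) ^ (q + 1))) (at x)"
proof -
  have "((\<lambda>t. inverse (g t) ^ q) has_real_derivative
      real q * (- (g' * inverse (g x ^ Suc (Suc 0))) * inverse (g x) ^ (q - Suc 0))) (at x)"
    by (rule DERIV_power[OF DERIV_inverse_fun[OF g nz]])
  moreover have "real q * (- (g' * inverse (g x ^ Suc (Suc 0))) * inverse (g x) ^ (q - Suc 0))
      = - (real q * g' * (1 / g x) ^ (q + 1))"
    by (cases q) (simp_all add: field_simps power2_eq_square)
  ultimately show ?thesis by (simp add: inverse_eq_divide)
qed

lemma pochhammer_two: "pochhammer (2::real) k = real (k + 1) * fact k"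
  by (induction k) (simp_all add: pochhammer_Suc algebra_simps)

lemma count_list_Cons_fun: "count_list (j # js) = (count_list js)(j := count_list js j + 1)"
  by auto

lemma all_eq_hd_Cons_iff:
  "a \<noteq> [] \<Longrightarrow> (\<forall>i\<in>set (j # a). i = hd (j # a)) \<longleftrightarrow> j = hd a \<and> (\<forall>i\<in>set a. i = hd a)"
  by (cases a) auto

definition multi_indices_le :: "(nat \<Rightarrow> nat) \<Rightarrow> (nat \<Rightarrow> nat) set" where
  "multi_indices_le \<nu> = {m. \<forall>i. m i \<le> \<nu> i}"

lemma finite_multi_indices_le:
  assumes "finite I" and "\<forall>i. i \<notin> I \<longrightarrow> \<nu> i = 0"
  shows "finite (multi_indices_le \<nu>)"
proof -
  have "multi_indices_le \<nu> \<subseteq> (\<lambda>f i. if i \<in> I then f i else 0) ` PiE I (\<lambda>i. {..\<nu> i})"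
  proof
    fix m assume m: "m \<in> multi_indices_le \<nu>"
    then have "m = (\<lambda>i. if i \<in> I then restrict m I i else 0)"
      using assms(2) by (auto simp: multi_indices_le_def fun_eq_iff) (metis le_zero_eq)
    moreover have "restrict m I \<in> PiE I (\<lambda>i. {..\<nu> i})"
      using m by (auto simp: multi_indices_le_def)
    ultimately show "m \<in> (\<lambda>f i. if i \<in> I then f i else 0) ` PiE I (\<lambda>i. {..\<nu> i})" by blast
  qed
  moreover have "finite (PiE I (\<lambda>i. {..\<nu> i}))"
    using assms(1) by (intro finite_PiE) auto
  ultimately show ?thesis by (meson finite_imageI finite_subset)
qed

lemma sum_multi_indices_le_shift:
  "(\<Sum>m\<in>{m \<in> multi_indices_le (\<nu>(j := \<nu> j + 1)). m j \<noteq> 0}. g m) =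
     (\<Sum>m\<in>multi_indices_le \<nu>. g (m(j := m j + 1)))"
proof (rule sum.reindex_bij_witness[where i = "\<lambda>m. m(j := m j + 1)" and j = "\<lambda>m. m(j := m j - 1)"])
  fix m assume "m \<in> {m \<in> multi_indices_le (\<nu>(j := \<nu> j + 1)). m j \<noteq> 0}"
  then have "m j \<noteq> 0" and le: "\<And>i. m i \<le> (\<nu>(j := \<nu> j + 1)) i"
    by (auto simp: multi_indices_le_def)
  show "m(j := m j - 1) \<in> multi_indices_le \<nu>"
    unfolding multi_indices_le_def
  proof (intro CollectI allI)
    fix i show "(m(j := m j - 1)) i \<le> \<nu> i" using le[of i] by (cases "i = j") auto
  qed
  show "(m(j := m j - 1))(j := (m(j := m j - 1)) j + 1) = m"
    using \<open>m j \<noteq> 0\<close> by (simp add: fun_eq_iff)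
  then show "g ((m(j := m j - 1))(j := (m(j := m j - 1)) j + 1)) = g m" by simp
qed (auto simp: multi_indices_le_def)

lemma a_seq_Suc_Suc: "a_seq (Suc (Suc k)) = a_seq (Suc k) + a_seq k / 2"
proof -
  define r where "r = 1 + sqrt 3"
  define s where "s = 1 - sqrt 3"
  have "r ^ 2 = 2 * r + 2" "s ^ 2 = 2 * s + 2"
    by (simp_all add: r_def s_def power2_eq_square algebra_simps)
  then have "r ^ (k + 3) = 2 * r ^ (k + 2) + 2 * r ^ (k + 1)" "s ^ (k + 3) = 2 * s ^ (k + 2) + 2 * s ^ (k + 1)"
    by (simp_all add: power_add power2_eq_square power3_eq_cube algebra_simps)
  then have "(r ^ (k + 3) - s ^ (k + 3)) / (2 ^ (k + 3) * sqrt 3) =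
      (r ^ (k + 2) - s ^ (k + 2)) / (2 ^ (k + 2) * sqrt 3) + (r ^ (k + 1) - s ^ (k + 1)) / (2 ^ (k + 1) * sqrt 3) / 2"
    by (simp add: field_simps power_add)
  then show ?thesis
    by (simp add: a_seq_def r_def s_def numeral_3_eq_3 numeral_2_eq_2)
qed

lemma a_seq_ge_1: "1 \<le> a_seq k"
proof (induction k rule: induct_nat_012)
  case 1
  have "(1 + sqrt 3) * (1 + sqrt 3) - (1 - sqrt 3) * (1 - sqrt 3) = 4 * sqrt 3"
    by (simp add: algebra_simps)
  then show ?case by (simp add: a_seq_def)
next
  case (ge2 n)
  then show ?case by (simp add: a_seq_Suc_Suc)
qed (simp add: a_seq_def)

lemma succ_mult_inverse_power_le:
  fixes \<sigma> :: real
  assumes "k \<le> N" and "0 < \<sigma>" and "\<sigma> \<le> 1"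
  shows "real (k + 1) * (1 / \<sigma>) ^ k \<le> 2 ^ N * (1 / \<sigma>) ^ (2 * N)"
proof (rule mult_mono)
  have "k + 1 \<le> (2::nat) ^ k" using Suc_leI[OF less_exp[of k]] by simp
  also have "\<dots> \<le> 2 ^ N" using assms(1) by (simp add: power_increasing)
  finally show "real (k + 1) \<le> 2 ^ N" by (metis of_nat_le_iff of_nat_numeral of_nat_power)
  show "(1 / \<sigma>) ^ k \<le> (1 / \<sigma>) ^ (2 * N)" using assms by (intro power_increasing) auto
qed (use assms(2) in auto)

text \<open>The partial derivatives of \<Phi> at 0 will dominate those of the inverse Jacobian; those of
  its powers have a closed form with Stirling numbers as coefficients.\<close>

locale scalar_majorant =
  fixes I :: "nat set" and b :: "nat \<Rightarrow> real" and c \<sigma> :: real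
  assumes finite_I: "finite I" and b_nonneg: "\<And>i. 0 \<le> b i"
    and c_pos: "0 < c" and \<sigma>_pos: "0 < \<sigma>"
begin

definition w :: "(nat \<Rightarrow> real) \<Rightarrow> real" where
  "w y = (\<Sum>i\<in>I. b i * (exp (c * y i) - 1))"

definition \<Phi> :: "(nat \<Rightarrow> real) \<Rightarrow> real" where
  "\<Phi> y = 1 / (\<sigma> - w y)"

definition \<Omega> :: "(nat \<Rightarrow> real) set" where
  "\<Omega> = {y. w y < \<sigma>}"

definition exp_monomial :: "(nat \<Rightarrow> nat) \<Rightarrow> (nat \<Rightarrow> real) \<Rightarrow> real" where
  "exp_monomial m y = exp (c * (\<Sum>i\<in>I. real (m i) * y i))"

definition msize :: "(nat \<Rightarrow> nat) \<Rightarrow> nat" where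
  "msize m = (\<Sum>i\<in>I. m i)"

definition stirling_coeff :: "nat \<Rightarrow> (nat \<Rightarrow> nat) \<Rightarrow> (nat \<Rightarrow> nat) \<Rightarrow> real" where
  "stirling_coeff p \<nu> m = pochhammer (real p) (msize m) * c ^ (\<Sum>i\<in>I. \<nu> i) *
     (\<Prod>i\<in>I. b i ^ m i * real (Stirling (\<nu> i) (m i)))"

definition Phi_pow_formula :: "nat \<Rightarrow> (nat \<Rightarrow> nat) \<Rightarrow> (nat \<Rightarrow> real) \<Rightarrow> real" where
  "Phi_pow_formula p \<nu> y =
     (\<Sum>m\<in>multi_indices_le \<nu>. stirling_coeff p \<nu> m * (\<Phi> y ^ (p + msize m) * exp_monomial m y))"

lemma w_0: "w (\<lambda>i. 0) = 0"
  by (simp add: w_def)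

lemma zero_in_\<Omega>: "(\<lambda>i. 0) \<in> \<Omega>"
  using \<sigma>_pos by (simp add: \<Omega>_def w_0)

lemma sum_upd_remove:
  "j \<in> I \<Longrightarrow> (\<Sum>i\<in>I. f ((g(j := t)) i) i) = f t j + (\<Sum>i\<in>I - {j}. f (g i) i)"
  using finite_I by (simp add: sum.remove)

lemma w_upd: "j \<in> I \<Longrightarrow> w (y(j := t)) = w y - b j * (exp (c * y j) - 1) + b j * (exp (c * t) - 1)"
  using sum_upd_remove[of j "\<lambda>s i. b i * (exp (c * s) - 1)" y t]
    sum_upd_remove[of j "\<lambda>s i. b i * (exp (c * s) - 1)" y "y j"]
  by (simp add: w_def)

lemma exp_monomial_upd:
  "j \<in> I \<Longrightarrow> exp_monomial m (y(j := t)) =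
     exp (c * (\<Sum>i\<in>I - {j}. real (m i) * y i)) * exp (c * real (m j) * t)"
  using sum_upd_remove[of j "\<lambda>s i. real (m i) * s" y t]
  by (simp add: exp_monomial_def exp_add[symmetric] algebra_simps)

lemma exp_monomial_Suc:
  "j \<in> I \<Longrightarrow> exp_monomial (m(j := m j + 1)) y = exp_monomial m y * exp (c * y j)"
  using sum_upd_remove[of j "\<lambda>s i. real s * y i" m "m j + 1"]
    sum_upd_remove[of j "\<lambda>s i. real s * y i" m "m j"]
  by (simp add: exp_monomial_def exp_add[symmetric] algebra_simps)

lemma msize_Suc: "j \<in> I \<Longrightarrow> msize (m(j := m j + 1)) = msize m + 1"
  using sum_upd_remove[of j "\<lambda>s i. s" m "m j + 1"] sum_upd_remove[of j "\<lambda>s i. s" m "m j"]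
  by (simp add: msize_def)

lemma Phi_pow_exp_monomial_has_derivative:
  assumes j: "j \<in> I" and y: "y \<in> \<Omega>"
  shows "((\<lambda>t. \<Phi> (y(j := t)) ^ q * exp_monomial m (y(j := t))) has_real_derivative
     real q * c * b j * (\<Phi> y ^ (q + 1) * exp_monomial (m(j := m j + 1)) y)
       + c * real (m j) * (\<Phi> y ^ q * exp_monomial m y)) (at (y j))"
proof -
  define g where "g t = \<sigma> - (w y - b j * (exp (c * y j) - 1)) - b j * (exp (c * t) - 1)" for t
  define R where "R = exp (c * (\<Sum>i\<in>I - {j}. real (m i) * y i))"
  have \<Phi>_upd: "\<Phi> (y(j := t)) = 1 / g t" for t
    by (simp add: \<Phi>_def g_def w_upd[OF j])
  have E_upd: "exp_monomial m (y(j := t)) = R * exp (c * real (m j) * t)" for t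
    by (simp add: R_def exp_monomial_upd[OF j])
  have nz: "g (y j) \<noteq> 0" using y by (simp add: g_def \<Omega>_def)
  have dg: "(g has_real_derivative - (b j * (c * exp (c * y j)))) (at (y j))"
    unfolding g_def by (auto intro!: derivative_eq_intros)
  have dE: "((\<lambda>t. R * exp (c * real (m j) * t)) has_real_derivative
      R * (c * real (m j) * exp (c * real (m j) * y j))) (at (y j))"
    by (auto intro!: derivative_eq_intros)
  have "((\<lambda>t. (1 / g t) ^ q * (R * exp (c * real (m j) * t))) has_real_derivative
      - (real q * - (b j * (c * exp (c * y j))) * (1 / g (y j)) ^ (q + 1)) * (R * exp (c * real (m j) * y j))
        + R * (c * real (m j) * exp (c * real (m j) * y j)) * (1 / g (y j)) ^ q) (at (y j))"
    by (rule DERIV_mult[OF DERIV_one_over_power[OF dg nz] dE])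
  note deriv = this
  have \<Phi>y: "\<Phi> y = 1 / g (y j)" and Ey: "exp_monomial m y = R * exp (c * real (m j) * y j)"
    using \<Phi>_upd[of "y j"] E_upd[of "y j"] by simp_all
  show ?thesis
    unfolding \<Phi>_upd E_upd exp_monomial_Suc[OF j] \<Phi>y Ey
    by (rule DERIV_cong[OF deriv]) (simp add: algebra_simps)
qed

lemma stirling_coeff_eq_0:
  "j \<in> I \<Longrightarrow> \<nu> j < m j \<Longrightarrow> stirling_coeff p \<nu> m = 0"
  unfolding stirling_coeff_def by (subst prod_zero[OF finite_I]) (auto intro!: bexI[of _ j])

lemma stirling_coeff_nonneg: "0 \<le> stirling_coeff p \<nu> m"
  unfolding stirling_coeff_def using b_nonneg c_pos
  by (auto intro!: mult_nonneg_nonneg prod_nonneg simp: pochhammer_prod)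

lemma stirling_coeff_Suc_Suc:
  assumes j: "j \<in> I"
  shows "stirling_coeff p (\<nu>(j := \<nu> j + 1)) (m(j := m j + 1)) =
    c * (real (m j + 1) * stirling_coeff p \<nu> (m(j := m j + 1))
      + (real p + real (msize m)) * b j * stirling_coeff p \<nu> m)"
proof -
  define P where "P = (\<Prod>i\<in>I - {j}. b i ^ m i * real (Stirling (\<nu> i) (m i)))"
  have prod_upd: "(\<Prod>i\<in>I. b i ^ (m(j := k)) i * real (Stirling ((\<nu>(j := n)) i) ((m(j := k)) i)))
      = b j ^ k * real (Stirling n k) * P" for n k
    unfolding P_def using j finite_I by (simp add: prod.remove)
  have "(\<Sum>i\<in>I. (\<nu>(j := \<nu> j + 1)) i) = (\<Sum>i\<in>I. \<nu> i) + 1"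
    using sum_upd_remove[of j "\<lambda>s i. s" \<nu> "\<nu> j + 1"] sum_upd_remove[of j "\<lambda>s i. s" \<nu> "\<nu> j"] j
    by simp
  moreover have "real (Stirling (\<nu> j + 1) (m j + 1)) =
      real (m j + 1) * real (Stirling (\<nu> j) (m j + 1)) + real (Stirling (\<nu> j) (m j))"
    by (simp add: algebra_simps)
  moreover have "pochhammer (real p) (msize m + 1) = pochhammer (real p) (msize m) * (real p + real (msize m))"
    by (simp add: pochhammer_rec')
  ultimately show ?thesis
    using prod_upd[where n = "\<nu> j + 1" and k = "m j + 1"] prod_upd[where n = "\<nu> j" and k = "m j + 1"]
      prod_upd[where n = "\<nu> j" and k = "m j"] msize_Suc[OF j, of m]
    by (simp add: stirling_coeff_def msize_Suc[OF j] algebra_simps)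
qed

lemma stirling_coeff_Suc:
  assumes j: "j \<in> I"
  shows "stirling_coeff p (\<nu>(j := \<nu> j + 1)) m = c * real (m j) * stirling_coeff p \<nu> m +
     (if m j = 0 then 0
      else c * (real p + real (msize (m(j := m j - 1)))) * b j * stirling_coeff p \<nu> (m(j := m j - 1)))"
proof (cases "m j")
  case 0
  then show ?thesis
    unfolding stirling_coeff_def by (subst prod_zero[OF finite_I]) (auto intro!: bexI[OF _ j])
next
  case (Suc k)
  then have "m = (m(j := k))(j := (m(j := k)) j + 1)" by (simp add: fun_eq_iff)
  then show ?thesis
    using stirling_coeff_Suc_Suc[OF j, of p \<nu> "m(j := k)"] Suc by (simp add: algebra_simps)
qed

lemma stirling_coeff_sum_step:
  assumes j: "j \<in> I" and supp: "\<forall>i. i \<notin> I \<longrightarrow> \<nu> i = 0"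
  shows "(\<Sum>m\<in>multi_indices_le \<nu>. stirling_coeff p \<nu> m *
       ((real p + real (msize m)) * c * b j * X (m(j := m j + 1)) + c * real (m j) * X m))
     = (\<Sum>m\<in>multi_indices_le (\<nu>(j := \<nu> j + 1)). stirling_coeff p (\<nu>(j := \<nu> j + 1)) m * X m)"
    (is "_ = (\<Sum>m\<in>?M'. _)")
proof -
  let ?M = "multi_indices_le \<nu>"
  define G where "G m = c * (real p + real (msize (m(j := m j - 1)))) *
        b j * stirling_coeff p \<nu> (m(j := m j - 1)) * X m" for m
  have fin: "finite ?M'"
    using finite_multi_indices_le[OF finite_I] supp j by auto
  have sub: "?M \<subseteq> ?M'" by (auto simp: multi_indices_le_def le_SucI)
  have "(\<Sum>m\<in>?M. stirling_coeff p \<nu> m *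
       ((real p + real (msize m)) * c * b j * X (m(j := m j + 1)) + c * real (m j) * X m))
     = (\<Sum>m\<in>?M. c * real (m j) * stirling_coeff p \<nu> m * X m) + (\<Sum>m\<in>?M. G (m(j := m j + 1)))"
    by (simp add: G_def sum.distrib[symmetric] algebra_simps)
  also have "(\<Sum>m\<in>?M. c * real (m j) * stirling_coeff p \<nu> m * X m) =
      (\<Sum>m\<in>?M'. c * real (m j) * stirling_coeff p \<nu> m * X m)"
  proof (rule sum.mono_neutral_left[OF fin sub], intro ballI)
    fix m assume "m \<in> ?M' - ?M"
    then have "\<nu> j < m j"
      by (auto simp: multi_indices_le_def split: if_splits) (metis not_less)
    then show "c * real (m j) * stirling_coeff p \<nu> m * X m = 0"
      by (simp add: stirling_coeff_eq_0[OF j])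
  qed
  also have "(\<Sum>m\<in>?M. G (m(j := m j + 1))) = (\<Sum>m\<in>{m \<in> ?M'. m j \<noteq> 0}. G m)"
    by (rule sum_multi_indices_le_shift[symmetric])
  also have "\<dots> = (\<Sum>m\<in>?M'. if m j = 0 then 0 else G m)"
    unfolding sum.inter_filter[OF fin] by (rule sum.cong) auto
  also have "(\<Sum>m\<in>?M'. c * real (m j) * stirling_coeff p \<nu> m * X m) + \<dots> =
      (\<Sum>m\<in>?M'. stirling_coeff p (\<nu>(j := \<nu> j + 1)) m * X m)"
    unfolding stirling_coeff_Suc[OF j] sum.distrib[symmetric] G_def
    by (rule sum.cong) (auto simp: algebra_simps)
  finally show ?thesis .
qed

lemma Phi_pow_formula_has_derivative:
  assumes j: "j \<in> I" and y: "y \<in> \<Omega>" and supp: "\<forall>i. i \<notin> I \<longrightarrow> \<nu> i = 0"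
  shows "((\<lambda>t. Phi_pow_formula p \<nu> (y(j := t))) has_real_derivative
           Phi_pow_formula p (\<nu>(j := \<nu> j + 1)) y) (at (y j))"
proof -
  let ?X = "\<lambda>m. \<Phi> y ^ (p + msize m) * exp_monomial m y"
  have "((\<lambda>t. Phi_pow_formula p \<nu> (y(j := t))) has_real_derivative
     (\<Sum>m\<in>multi_indices_le \<nu>. stirling_coeff p \<nu> m *
        ((real p + real (msize m)) * c * b j * ?X (m(j := m j + 1)) + c * real (m j) * ?X m))) (at (y j))"
    unfolding Phi_pow_formula_def msize_Suc[OF j]
    by (intro DERIV_sum DERIV_cmult DERIV_cong[OF Phi_pow_exp_monomial_has_derivative[OF j y]])
       (simp add: add.assoc)
  moreover have eq: "(\<Sum>m\<in>multi_indices_le \<nu>. stirling_coeff p \<nu> m *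
        ((real p + real (msize m)) * c * b j * ?X (m(j := m j + 1)) + c * real (m j) * ?X m))
      = Phi_pow_formula p (\<nu>(j := \<nu> j + 1)) y"
    unfolding Phi_pow_formula_def
    by (rule stirling_coeff_sum_step[OF j supp,
          where X = "\<lambda>m. \<Phi> y ^ (p + msize m) * exp_monomial m y"])
  ultimately show ?thesis by (simp only:)
qed

lemma coord_open_\<Omega>: "coord_open \<Omega> I"
  unfolding coord_open_def
proof (intro ballI)
  fix y j assume y: "y \<in> \<Omega>" and j: "j \<in> I"
  have "((\<lambda>t. w (y(j := t))) \<longlongrightarrow> w y) (at (y j))"
    unfolding w_upd[OF j] by (auto intro!: tendsto_eq_intros)
  then have "\<forall>\<^sub>F t in at (y j). w (y(j := t)) < \<sigma>"
    using y by (intro order_tendstoD) (auto simp: \<Omega>_def)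
  then show "\<forall>\<^sub>F t in nhds (y j). y(j := t) \<in> \<Omega>"
    using y by (simp add: eventually_nhds_conv_at \<Omega>_def)
qed

lemma ypartl_Phi_pow:
  "set js \<subseteq> I \<Longrightarrow> y \<in> \<Omega> \<Longrightarrow> ypartl js (\<lambda>y. \<Phi> y ^ p) y = Phi_pow_formula p (count_list js) y"
proof (induction js arbitrary: y)
  case Nil
  have "multi_indices_le (\<lambda>i. 0) = {\<lambda>i. 0}" by (auto simp: multi_indices_le_def)
  then show ?case by (simp add: Phi_pow_formula_def stirling_coeff_def msize_def exp_monomial_def)
next
  case (Cons j js)
  have j: "j \<in> I" and js: "set js \<subseteq> I" using Cons.prems by auto
  have supp: "\<forall>i. i \<notin> I \<longrightarrow> count_list js i = 0"
    using js by (auto simp: count_list_0_iff)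
  have "\<forall>\<^sub>F t in nhds (y j). y(j := t) \<in> \<Omega>"
    using coord_open_\<Omega> Cons.prems j unfolding coord_open_def by auto
  then have "ypart j (ypartl js (\<lambda>y. \<Phi> y ^ p)) y = ypart j (Phi_pow_formula p (count_list js)) y"
    by (intro ypart_cong_eventually) (auto elim!: eventually_mono intro: Cons.IH[OF js])
  also have "\<dots> = Phi_pow_formula p (count_list (j # js)) y"
    unfolding count_list_Cons_fun
    by (rule ypart_eqI_real, rule Phi_pow_formula_has_derivative[OF j Cons.prems(2) supp])
  finally show ?case by (simp only: ypartl.simps)
qed

lemma ypartl_Phi_pow_nonneg: "set js \<subseteq> I \<Longrightarrow> 0 \<le> ypartl js (\<lambda>y. \<Phi> y ^ p) (\<lambda>i. 0)"
  unfolding ypartl_Phi_pow[OF _ zero_in_\<Omega>] Phi_pow_formula_def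
  using \<sigma>_pos stirling_coeff_nonneg
  by (auto simp: \<Phi>_def w_0 exp_monomial_def intro!: sum_nonneg mult_nonneg_nonneg)

lemma coord_smooth_Phi_pow: "coord_smooth \<Omega> I (\<lambda>y. \<Phi> y ^ p)"
  unfolding coord_smooth_def
proof (intro allI impI ballI)
  fix js y j assume js: "set js \<subseteq> I" and y: "y \<in> \<Omega>" and j: "j \<in> I"
  have "\<forall>\<^sub>F t in nhds (y j). y(j := t) \<in> \<Omega>"
    using coord_open_\<Omega> y j unfolding coord_open_def by auto
  moreover have "((\<lambda>t. Phi_pow_formula p (count_list js) (y(j := t))) has_real_derivative
      Phi_pow_formula p ((count_list js)(j := count_list js j + 1)) y) (at (y j))"
    using js by (intro Phi_pow_formula_has_derivative j y) (auto simp: count_list_0_iff)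
  ultimately have "((\<lambda>t. ypartl js (\<lambda>y. \<Phi> y ^ p) (y(j := t))) has_real_derivative
      Phi_pow_formula p ((count_list js)(j := count_list js j + 1)) y) (at (y j))"
    by (subst DERIV_cong_ev[OF refl _ refl])
       (auto elim!: eventually_mono simp: ypartl_Phi_pow[OF js] eventually_nhds_conv_at)
  then show "(\<lambda>t. ypartl js (\<lambda>y. \<Phi> y ^ p) (y(j := t))) differentiable (at (y j))"
    by (rule has_derivative_imp_differentiable_real)
qed

definition denom_partial :: "nat list \<Rightarrow> (nat \<Rightarrow> real) \<Rightarrow> real" where
  "denom_partial a y =
     (if a = [] then \<sigma> - w y
      else if \<forall>i\<in>set a. i = hd a then - (c ^ length a * b (hd a) * exp (c * y (hd a)))
      else 0)"

lemma denom_partial_has_derivative: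
  assumes j: "j \<in> I"
  shows "((\<lambda>t. denom_partial a (y(j := t))) has_real_derivative denom_partial (j # a) y) (at (y j))"
proof (cases "a = []")
  case True
  have "((\<lambda>t. \<sigma> - (w y - b j * (exp (c * y j) - 1) + b j * (exp (c * t) - 1))) has_real_derivative
      - (c * b j * exp (c * y j))) (at (y j))"
    by (auto intro!: derivative_eq_intros)
  then show ?thesis using True by (simp add: denom_partial_def w_upd[OF j])
next
  case a: False
  show ?thesis
  proof (cases "j = hd a \<and> (\<forall>i\<in>set a. i = hd a)")
    case True
    have "((\<lambda>t. - (c ^ length a * b j * exp (c * t))) has_real_derivative
        - (c ^ Suc (length a) * b j * exp (c * y j))) (at (y j))"
      by (auto intro!: derivative_eq_intros)
    then show ?thesis using True a by (simp add: denom_partial_def)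
  next
    case False
    then have "denom_partial a (y(j := t)) = denom_partial a y" for t
      using a by (cases "\<forall>i\<in>set a. i = hd a") (auto simp: denom_partial_def)
    moreover have "\<not> (\<forall>i\<in>set (j # a). i = hd (j # a))"
      using False all_eq_hd_Cons_iff[OF a] by blast
    then have "denom_partial (j # a) y = 0" by (auto simp: denom_partial_def)
    ultimately show ?thesis by simp
  qed
qed

lemma ypartl_denom: "set a \<subseteq> I \<Longrightarrow> ypartl a (\<lambda>y. \<sigma> - w y) = denom_partial a"
proof (induction a)
  case (Cons j a)
  then show ?case
    by (auto simp: fun_eq_iff intro!: ypart_eqI_real denom_partial_has_derivative)
qed (simp add: denom_partial_def fun_eq_iff)

lemma coord_smooth_denom: "coord_smooth \<Omega> I (\<lambda>y. \<sigma> - w y)"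
  unfolding coord_smooth_def
  by (auto simp: ypartl_denom intro!: has_derivative_imp_differentiable_real denom_partial_has_derivative)

text \<open>Differentiating (\<sigma> - w) \<Phi> = 1 by the Leibniz rule gives a recursion for the
  partial derivatives of \<Phi> at 0 of exactly the shape satisfied, as an inequality,
  by those of the inverse Jacobian.\<close>

lemma ypartl_Phi_recursion:
  assumes js: "set js \<subseteq> I" "js \<noteq> []" and r: "subseq_splits js = ([], js) # r"
  shows "\<sigma> * ypartl js \<Phi> (\<lambda>i. 0) =
     (\<Sum>p\<leftarrow>r. - denom_partial (fst p) (\<lambda>i. 0) * ypartl (snd p) \<Phi> (\<lambda>i. 0))"
proof -
  have \<Phi>: "coord_smooth \<Omega> I \<Phi>"
    using coord_smooth_Phi_pow[of 1] by simp
  have "ypartl js (\<lambda>y. (\<sigma> - w y) * \<Phi> y) (\<lambda>i. 0) = ypartl js (\<lambda>y. 1) (\<lambda>i. 0)"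
    by (rule ypartl_cong_on[OF coord_open_\<Omega> _ js(1) zero_in_\<Omega>]) (simp add: \<Phi>_def \<Omega>_def)
  also have "\<dots> = 0" by (simp add: ypartl_const[OF js(2)])
  finally have "0 = (\<Sum>p\<leftarrow>subseq_splits js. ypartl (fst p) (\<lambda>y. \<sigma> - w y) (\<lambda>i. 0) * ypartl (snd p) \<Phi> (\<lambda>i. 0))"
    using ypartl_bilinear[OF bounded_bilinear_mult coord_open_\<Omega> coord_smooth_denom \<Phi> js(1) zero_in_\<Omega>]
    by simp
  also have "\<dots> = \<sigma> * ypartl js \<Phi> (\<lambda>i. 0) + (\<Sum>p\<leftarrow>r. denom_partial (fst p) (\<lambda>i. 0) * ypartl (snd p) \<Phi> (\<lambda>i. 0))"
  proof -
    have "set (fst p) \<subseteq> I" if "p \<in> set r" for p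
      using that subseq_splits_length_set[of p js] js(1) r by auto
    then show ?thesis
      by (simp add: r ypartl_denom w_0 denom_partial_def[of "[]"] cong: map_cong)
  qed
  finally have "\<sigma> * ypartl js \<Phi> (\<lambda>i. 0) = - (\<Sum>p\<leftarrow>r. denom_partial (fst p) (\<lambda>i. 0) * ypartl (snd p) \<Phi> (\<lambda>i. 0))"
    by linarith
  then show ?thesis by (simp add: uminus_sum_list_map o_def)
qed

lemma ypartl_Phi_sq:
  "set js \<subseteq> I \<Longrightarrow> ypartl js (\<lambda>y. \<Phi> y ^ 2) (\<lambda>i. 0) =
     (\<Sum>p\<leftarrow>subseq_splits js. ypartl (fst p) \<Phi> (\<lambda>i. 0) * ypartl (snd p) \<Phi> (\<lambda>i. 0))"
  using ypartl_bilinear[OF bounded_bilinear_mult coord_open_\<Omega>, of \<Phi> \<Phi> js "\<lambda>i. 0"]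
    coord_smooth_Phi_pow[of 1] zero_in_\<Omega>
  by (simp add: power2_eq_square)

lemma Phi_sq_formula_at_0_le:
  assumes \<sigma>: "\<sigma> \<le> 1" and \<xi>: "0 \<le> \<xi>" and supp: "\<forall>i. i \<notin> I \<longrightarrow> \<nu> i = 0"
  shows "Phi_pow_formula 2 \<nu> (\<lambda>i. 0) \<le> 1 / \<sigma>^2 * (2 * c * (1 + \<xi>) / \<sigma>^2) ^ (\<Sum>i\<in>I. \<nu> i) *
    (\<Sum>m\<in>multi_indices_le \<nu>. fact (msize m) * a_seq (msize m) *
       (\<Prod>j\<in>I. fact (m j) * b j ^ m j * real (Stirling (\<nu> j) (m j))))"
proof -
  define N where "N = (\<Sum>i\<in>I. \<nu> i)"
  have "stirling_coeff 2 \<nu> m * (1 / \<sigma>) ^ (2 + msize m) \<le>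
      1 / \<sigma>^2 * (2 * c * (1 + \<xi>) / \<sigma>^2) ^ N * (fact (msize m) * a_seq (msize m) *
        (\<Prod>j\<in>I. fact (m j) * b j ^ m j * real (Stirling (\<nu> j) (m j))))"
    if m: "m \<in> multi_indices_le \<nu>" for m
  proof -
    define k where "k = msize m"
    define P where "P = (\<Prod>i\<in>I. b i ^ m i * real (Stirling (\<nu> i) (m i)))"
    define F where "F = (\<Prod>j\<in>I. fact (m j) :: real)"
    have "0 \<le> P" unfolding P_def using b_nonneg by (auto intro!: prod_nonneg)
    have "1 \<le> F" unfolding F_def by (rule prod_ge_1) simp
    moreover have "1 \<le> (1 + \<xi>) ^ N" using \<xi> by (simp add: one_le_power)
    ultimately have ge_1: "1 \<le> (1 + \<xi>) ^ N * a_seq k * F"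
      using a_seq_ge_1[of k] by (metis mult_mono' mult_1 zero_le_one)
    have "k \<le> N" unfolding k_def N_def msize_def using m by (auto simp: multi_indices_le_def intro!: sum_mono)
    then have "real (k + 1) * (1 / \<sigma>) ^ k \<le> 2 ^ N * (1 / \<sigma>) ^ (2 * N) * 1"
      using succ_mult_inverse_power_le[OF _ \<sigma>_pos \<sigma>] by simp
    also have "\<dots> \<le> 2 ^ N * (1 / \<sigma>) ^ (2 * N) * ((1 + \<xi>) ^ N * a_seq k * F)"
      using ge_1 \<sigma>_pos by (intro mult_left_mono) auto
    finally have "(fact k * c ^ N * P / \<sigma>^2) * (real (k + 1) * (1 / \<sigma>) ^ k) \<le>
        (fact k * c ^ N * P / \<sigma>^2) * (2 ^ N * (1 / \<sigma>) ^ (2 * N) * ((1 + \<xi>) ^ N * a_seq k * F))"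
      using \<open>0 \<le> P\<close> c_pos by (intro mult_left_mono) auto
    moreover have "(2 * c * (1 + \<xi>) / \<sigma>^2) ^ N = c ^ N * 2 ^ N * (1 + \<xi>) ^ N / (\<sigma>^2) ^ N"
      by (simp add: power_mult_distrib power_divide)
    then have "(2 * c * (1 + \<xi>) / \<sigma>^2) ^ N = c ^ N * 2 ^ N * (1 / \<sigma>) ^ (2 * N) * (1 + \<xi>) ^ N"
      by (simp add: power_mult power_one_over)
    ultimately show ?thesis
      unfolding stirling_coeff_def k_def[symmetric] N_def[symmetric] P_def[symmetric]
      by (simp add: pochhammer_two power_add F_def P_def prod.distrib field_simps power2_eq_square)
  qed
  then show ?thesis
    unfolding Phi_pow_formula_def N_def[symmetric]
    by (simp add: \<Phi>_def w_0 exp_monomial_def sum_distrib_left sum_mono)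
qed

end

section \<open>Spectral norm and singular values\<close>

lemma matrix_add_rdistrib: "(A + A') ** B = A ** B + A' ** B"
  for A A' :: "real^'n^'m" and B :: "real^'k^'n"
  by (simp add: matrix_matrix_mult_def vec_eq_iff sum.distrib distrib_right)

lemma matrix_mult_scaleR_right: "A ** (r *\<^sub>R B) = r *\<^sub>R (A ** B)"
  for A :: "real^'n^'m" and B :: "real^'k^'n"
  by (simp add: matrix_matrix_mult_def vec_eq_iff sum_distrib_left mult.left_commute)

lemma bounded_bilinear_matrix_mult: "bounded_bilinear (\<lambda>(A::real^'n^'m) (B::real^'k^'n). A ** B)"
proof -
  have "bilinear (\<lambda>(A::real^'n^'m) (B::real^'k^'n). A ** B)"
    unfolding bilinear_def
    by (auto simp: linear_iff matrix_add_ldistrib matrix_add_rdistrib scalar_matrix_assoc[symmetric]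
        matrix_mult_scaleR_right)
  then show ?thesis using bilinear_conv_bounded_bilinear by blast
qed

lemma bounded_bilinear_matrix_mult_transpose:
  "bounded_bilinear (\<lambda>(A::real^'n^'m) (B::real^'n^'k). A ** transpose B)"
proof -
  have "linear (\<lambda>A::real^'n^'k. transpose A)"
    by (auto simp: linear_iff transpose_def vec_eq_iff)
  then show ?thesis
    using bounded_bilinear.comp[OF bounded_bilinear_matrix_mult bounded_linear_ident]
      linear_conv_bounded_linear by fastforce
qed

lemma spec_norm_mult_vec: "norm (A *v v) \<le> spec_norm A * norm v" for A :: "real^'n^'m"
  unfolding spec_norm_def by (rule onorm) simp

lemma spec_norm_nonneg: "0 \<le> spec_norm A" for A :: "real^'n^'m"
  unfolding spec_norm_def by (rule onorm_pos_le) simp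

lemma spec_norm_le: "(\<And>v. norm (A *v v) \<le> B * norm v) \<Longrightarrow> spec_norm A \<le> B" for A :: "real^'n^'m"
  unfolding spec_norm_def by (rule onorm_le)

lemma spec_norm_mult_le: "spec_norm (A ** B) \<le> spec_norm A * spec_norm B"
  for A :: "real^'n^'m" and B :: "real^'k^'n"
proof -
  have "(\<lambda>v. (A ** B) *v v) = (\<lambda>v. A *v v) \<circ> (\<lambda>v. B *v v)"
    by (auto simp: matrix_vector_mul_assoc)
  then show ?thesis
    unfolding spec_norm_def using onorm_compose[of "\<lambda>v. A *v v" "\<lambda>v. B *v v"] by simp
qed

lemma spec_norm_add_le: "spec_norm (A + B) \<le> spec_norm A + spec_norm B" for A :: "real^'n^'m"
proof -
  have "(*v) (A + B) = (\<lambda>x. A *v x + B *v x)"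
    by (rule ext) (simp add: matrix_vector_mult_add_rdistrib)
  then show ?thesis
    unfolding spec_norm_def using onorm_triangle[of "\<lambda>v. A *v v" "\<lambda>v. B *v v"] by simp
qed

lemma spec_norm_scaleR: "spec_norm (r *\<^sub>R A) = \<bar>r\<bar> * spec_norm A" for A :: "real^'n^'m"
proof -
  have "(*v) (r *\<^sub>R A) = (\<lambda>x. r *\<^sub>R (A *v x))"
    by (rule ext) (simp add: scaleR_matrix_vector_assoc)
  then show ?thesis
    unfolding spec_norm_def using onorm_scaleR[of "\<lambda>v. A *v v" r] by simp
qed

lemma spec_norm_uminus: "spec_norm (- A) = spec_norm A" for A :: "real^'n^'m"
  using spec_norm_scaleR[of "-1" A] by simp

lemma spec_norm_zero: "spec_norm (0::real^'n^'m) = 0"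
  using spec_norm_scaleR[of 0 "0::real^'n^'m"] by simp

lemma spec_norm_sum_list_le:
  "spec_norm (\<Sum>x\<leftarrow>xs. f x) \<le> (\<Sum>x\<leftarrow>xs. spec_norm (f x))" for f :: "'a \<Rightarrow> real^'n^'m"
  by (induction xs) (auto simp: spec_norm_zero intro: order_trans[OF spec_norm_add_le])

lemma spec_norm_transpose_le: "spec_norm (transpose A) \<le> spec_norm A" for A :: "real^'n^'m"
proof (rule spec_norm_le)
  fix v :: "real^'m"
  have "norm (transpose A *v v) ^ 2 = inner v (A *v (transpose A *v v))"
    by (metis dot_lmul_matrix power2_norm_eq_inner transpose_matrix_vector)
  also have "\<dots> \<le> norm v * (spec_norm A * norm (transpose A *v v))"
    by (rule order_trans[OF Cauchy_Schwarz_ineq2[THEN order_trans[OF abs_ge_self]]])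
       (intro mult_left_mono spec_norm_mult_vec norm_ge_zero)
  finally show "norm (transpose A *v v) \<le> spec_norm A * norm v"
    using spec_norm_nonneg[of A]
    by (cases "transpose A *v v = 0") (auto simp: power2_eq_square mult_ac)
qed

lemma norm_row_le_spec_norm: "norm (A $ i) \<le> spec_norm A" for A :: "real^'n^'m"
proof -
  have "norm (A $ i) ^ 2 = (A *v (A $ i)) $ i"
    by (simp add: matrix_mult_dot power2_norm_eq_inner)
  also have "\<dots> \<le> spec_norm A * norm (A $ i)"
    by (meson abs_ge_self component_le_norm_cart order_trans spec_norm_mult_vec)
  finally show ?thesis
    using spec_norm_nonneg[of A] by (cases "A $ i = 0") (auto simp: power2_eq_square)
qed

lemma norm_le_card_spec_norm: "norm A \<le> real CARD('m) * spec_norm A" for A :: "real^'n^'m"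
proof -
  have "norm A \<le> (\<Sum>i\<in>UNIV. norm (A $ i))"
    unfolding norm_vec_def by (rule L2_set_le_sum) simp
  also have "\<dots> \<le> (\<Sum>i\<in>(UNIV::'m set). spec_norm A)"
    by (intro sum_mono norm_row_le_spec_norm)
  finally show ?thesis by simp
qed

lemma matrix_inv_unique:
  fixes A B :: "real^'n^'n"
  assumes "A ** B = mat 1" and "B ** A = mat 1"
  shows "matrix_inv A = B"
proof -
  have "\<exists>A'. A ** A' = mat 1 \<and> A' ** A = mat 1" using assms by blast
  then have left: "matrix_inv A ** A = mat 1"
    unfolding matrix_inv_def by (rule someI2_ex) blast
  have "matrix_inv A = (matrix_inv A ** A) ** B"
    by (metis assms(1) matrix_mul_assoc matrix_mul_rid)
  then show ?thesis by (simp add: left)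
qed

lemma matrix_inv_gram:
  fixes J K :: "real^'n^'n"
  assumes JK: "J ** K = mat 1" and KJ: "K ** J = mat 1"
  shows "matrix_inv (transpose J ** J) = K ** transpose K"
proof (rule matrix_inv_unique)
  have "transpose J ** transpose K = mat 1"
    using KJ by (metis matrix_transpose_mul transpose_mat)
  then show "(transpose J ** J) ** (K ** transpose K) = mat 1"
    by (metis JK matrix_mul_assoc matrix_mul_rid)
  have "transpose K ** transpose J = mat 1"
    using JK by (metis matrix_transpose_mul transpose_mat)
  then show "(K ** transpose K) ** (transpose J ** J) = mat 1"
    by (metis KJ matrix_mul_assoc matrix_mul_rid)
qed

lemma nonneg_quadratic_linear_coeff_eq_0:
  fixes \<alpha> \<beta> :: real
  assumes "\<And>t. 0 \<le> 2 * t * \<alpha> + t^2 * \<beta>"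
  shows "\<alpha> = 0"
proof (rule ccontr)
  assume "\<alpha> \<noteq> 0"
  define d where "d = \<bar>\<beta>\<bar> + 1"
  have d: "0 < d" by (simp add: d_def)
  have "2 * (- \<alpha> / d) * \<alpha> + (- \<alpha> / d)^2 * \<beta> = \<alpha>^2 * (\<beta> - 2 * d) / d^2"
    using d by (simp add: field_simps power2_eq_square)
  then have "0 \<le> \<alpha>^2 * (\<beta> - 2 * d)"
    using assms[of "- \<alpha> / d"] d by (simp add: zero_le_divide_iff)
  moreover have "\<alpha>^2 * (\<beta> - 2 * d) < 0"
    using \<open>\<alpha> \<noteq> 0\<close> by (intro mult_pos_neg) (auto simp: d_def)
  ultimately show False by linarith
qed

lemma norm_add_scaleR_power2:
  "norm (a + t *\<^sub>R b) ^ 2 = norm a ^ 2 + 2 * t * inner a b + t^2 * norm (b::'a::real_inner) ^ 2"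
proof -
  have "norm (a + t *\<^sub>R b) ^ 2 = inner (a + t *\<^sub>R b) (a + t *\<^sub>R b)"
    by (simp add: power2_norm_eq_inner)
  also have "\<dots> = inner a a + 2 * t * inner a b + t^2 * inner b b"
    by (simp add: inner_add_left inner_add_right inner_commute[of b a] power2_eq_square algebra_simps)
  finally show ?thesis by (simp add: power2_norm_eq_inner)
qed

lemma gram_eigenvector_of_minimiser:
  fixes A :: "real^'n^'m"
  assumes min: "\<And>v. norm (A *v u) ^ 2 * norm v ^ 2 \<le> norm (A *v v) ^ 2" and u: "norm u = 1"
  shows "(transpose A ** A) *v u = norm (A *v u) ^ 2 *\<^sub>R u"
proof -
  define lam where "lam = norm (A *v u) ^ 2"
  have orth: "inner ((transpose A ** A) *v u - lam *\<^sub>R u) w = 0" for w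
  proof -
    define \<alpha> where "\<alpha> = inner (A *v u) (A *v w) - lam * inner u w"
    define \<beta> where "\<beta> = norm (A *v w) ^ 2 - lam * norm w ^ 2"
    have "0 \<le> 2 * t * \<alpha> + t^2 * \<beta>" for t
      using min[of "u + t *\<^sub>R w"] u
      by (simp add: \<alpha>_def \<beta>_def lam_def norm_add_scaleR_power2 matrix_vector_right_distrib
          matrix_vector_mult_scaleR algebra_simps)
    then have "\<alpha> = 0" by (rule nonneg_quadratic_linear_coeff_eq_0)
    moreover have "inner (A *v u) (A *v w) = inner ((transpose A ** A) *v u) w"
      by (metis dot_lmul_matrix inner_commute matrix_vector_mul_assoc transpose_matrix_vector
          vector_transpose_matrix)
    ultimately show ?thesis by (simp add: \<alpha>_def inner_diff_left)
  qed
  show ?thesis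
    using orth[of "(transpose A ** A) *v u - lam *\<^sub>R u"] by (simp add: lam_def)
qed

lemma singular_value_lower_bound:
  fixes A :: "real^'n^'n"
  assumes sv: "\<And>s. singular_value A s \<Longrightarrow> \<sigma> \<le> s" and "0 \<le> \<sigma>"
  shows "\<sigma> * norm v \<le> norm (A *v v)"
proof -
  have "sphere (0::real^'n) 1 \<noteq> {}" by (metis empty_iff mem_sphere_0 norm_axis_1)
  moreover have "continuous_on (sphere 0 1) (\<lambda>v. norm (A *v v))"
    by (intro continuous_intros)
  ultimately obtain u where u: "norm u = 1" and u_min: "\<And>v. norm v = 1 \<Longrightarrow> norm (A *v u) \<le> norm (A *v v)"
    using continuous_attains_inf[OF compact_sphere] by (metis mem_sphere_0)
  have min: "norm (A *v u) * norm v \<le> norm (A *v v)" for v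
  proof (cases "v = 0")
    case False
    then have "norm (A *v u) \<le> norm (A *v ((1 / norm v) *\<^sub>R v))" by (intro u_min) simp
    then show ?thesis using False by (simp add: matrix_vector_mult_scaleR field_simps)
  qed simp
  have "(transpose A ** A) *v u = norm (A *v u) ^ 2 *\<^sub>R u"
  proof (rule gram_eigenvector_of_minimiser[OF _ u])
    fix v
    show "norm (A *v u) ^ 2 * norm v ^ 2 \<le> norm (A *v v) ^ 2"
      using power_mono[OF min[of v], of 2] by (simp add: power_mult_distrib)
  qed
  then have "singular_value A (norm (A *v u))"
    unfolding singular_value_def using u by (intro conjI exI[of _ u]) auto
  then have "\<sigma> * norm v \<le> norm (A *v u) * norm v" by (intro mult_right_mono sv) auto
  also have "\<dots> \<le> norm (A *v v)" by (rule min)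
  finally show ?thesis .
qed

section \<open>The inverse Jacobian as a function of the parameters\<close>

lemma has_vector_derivative_continuous_slope:
  fixes f g :: "real \<Rightarrow> 'a::real_normed_vector"
  assumes eq: "\<And>z. f z - f x = (z - x) *\<^sub>R g z" and cont: "isCont g x"
  shows "(f has_vector_derivative g x) (at x)"
proof -
  have "(\<lambda>h. norm (g (x + h) - g x)) \<midarrow>0\<rightarrow> 0"
    using cont by (simp add: isCont_iff tendsto_norm_zero_iff LIM_zero)
  moreover have "\<forall>\<^sub>F h in at 0. norm (g (x + h) - g x) = norm (f (x + h) - f x - h *\<^sub>R g x) / norm h"
    unfolding eventually_at_filter
    by (intro always_eventually allI impI) (simp add: eq[of "x + _"] scaleR_diff_right[symmetric])
  ultimately have "(\<lambda>h. norm (f (x + h) - f x - h *\<^sub>R g x) / norm h) \<midarrow>0\<rightarrow> 0"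
    by (rule Lim_transform_eventually)
  then show ?thesis
    unfolding has_vector_derivative_def has_derivative_at using bounded_linear_scaleR_left by blast
qed

lemma has_vector_derivative_scaleR_const:
  "(f has_real_derivative f') (at x) \<Longrightarrow> ((\<lambda>t. f t *\<^sub>R A) has_vector_derivative f' *\<^sub>R A) (at x)"
  using has_vector_derivative_scaleR[of f f' x UNIV "\<lambda>_. A" 0] by simp

lemma sin_add_pi_half: "sin (x + pi / 2) = cos x"
  by (simp add: sin_add)

locale sine_jacobian =
  fixes M :: "nat \<Rightarrow> real^'n^'n" and J :: "(nat \<Rightarrow> real) \<Rightarrow> real^'n^'n" and \<sigma> :: real
  assumes summable_M: "summable (\<lambda>i. norm (M i))"
    and J_eq: "\<And>y. J y = mat 1 + (1 / sqrt 6) *\<^sub>R (\<Sum>i. sin (2 * pi * y i) *\<^sub>R M i)"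
    and \<sigma>_pos: "0 < \<sigma>"
    and J_lower: "\<And>y v. \<sigma> * norm v \<le> norm (J y *v v)"
begin

definition J_coord_deriv :: "nat \<Rightarrow> nat \<Rightarrow> (nat \<Rightarrow> real) \<Rightarrow> real^'n^'n" where
  "J_coord_deriv j k y = ((2 * pi) ^ k * sin (2 * pi * y j + real k * pi / 2) / sqrt 6) *\<^sub>R M j"

text \<open>J is a sum of functions of one coordinate each, so its mixed partial derivatives vanish.\<close>

definition J_partial :: "nat list \<Rightarrow> (nat \<Rightarrow> real) \<Rightarrow> real^'n^'n" where
  "J_partial a y =
     (if a = [] then J y else if \<forall>i\<in>set a. i = hd a then J_coord_deriv (hd a) (length a) y else 0)"

definition Jinv :: "(nat \<Rightarrow> real) \<Rightarrow> real^'n^'n" where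
  "Jinv y = matrix_inv (J y)"

lemma J_upd: "J (y(j := t)) = J y + ((sin (2 * pi * t) - sin (2 * pi * y j)) / sqrt 6) *\<^sub>R M j"
proof -
  define f where "f i = sin (2 * pi * y i) *\<^sub>R M i" for i
  define d where "d = (sin (2 * pi * t) - sin (2 * pi * y j)) *\<^sub>R M j"
  have "summable f"
    by (rule summable_comparison_test'[OF summable_M, of 0])
       (simp add: f_def mult_left_le_one_le abs_sin_le_one)
  moreover have d: "(\<lambda>i. if i = j then d else 0) sums d"
    using sums_single[of j "\<lambda>_. d"] by simp
  moreover have "(\<lambda>i. sin (2 * pi * (y(j := t)) i) *\<^sub>R M i) = (\<lambda>i. f i + (if i = j then d else 0))"
    by (auto simp: f_def d_def fun_eq_iff scaleR_diff_left)
  ultimately have "(\<Sum>i. sin (2 * pi * (y(j := t)) i) *\<^sub>R M i) = (\<Sum>i. f i) + d"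
    using suminf_add[OF \<open>summable f\<close> sums_summable[OF d]] sums_unique[OF d] by simp
  then show ?thesis
    by (simp add: J_eq f_def d_def scaleR_add_right)
qed

lemma J_has_derivative: "((\<lambda>t. J (y(j := t))) has_vector_derivative J_coord_deriv j 1 y) (at (y j))"
proof -
  have "sin (2 * pi * y j + real 1 * pi / 2) = cos (2 * pi * y j)"
    using sin_add_pi_half by simp
  then have "((\<lambda>t. (sin (2 * pi * t) - sin (2 * pi * y j)) / sqrt 6) has_real_derivative
      (2 * pi) ^ 1 * sin (2 * pi * y j + real 1 * pi / 2) / sqrt 6) (at (y j))"
    by (auto intro!: derivative_eq_intros simp: field_simps)
  then have "((\<lambda>t. J y + ((sin (2 * pi * t) - sin (2 * pi * y j)) / sqrt 6) *\<^sub>R M j)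
      has_vector_derivative 0 + J_coord_deriv j 1 y) (at (y j))"
    unfolding J_coord_deriv_def
    by (intro has_vector_derivative_add has_vector_derivative_const has_vector_derivative_scaleR_const)
  then show ?thesis unfolding J_upd by simp
qed

lemma J_coord_deriv_has_derivative:
  "((\<lambda>t. J_coord_deriv j k (y(j := t))) has_vector_derivative J_coord_deriv j (Suc k) y) (at (y j))"
proof -
  have "sin (2 * pi * y j + real (Suc k) * pi / 2) = cos (2 * pi * y j + real k * pi / 2)"
    using sin_add_pi_half[of "2 * pi * y j + real k * pi / 2"] by (simp add: algebra_simps add_divide_distrib)
  then have "((\<lambda>t. (2 * pi) ^ k * sin (2 * pi * t + real k * pi / 2) / sqrt 6) has_real_derivative
      (2 * pi) ^ Suc k * sin (2 * pi * y j + real (Suc k) * pi / 2) / sqrt 6) (at (y j))"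
    by (auto intro!: derivative_eq_intros simp: field_simps)
  then show ?thesis
    unfolding J_coord_deriv_def by (simp add: has_vector_derivative_scaleR_const)
qed

lemma J_partial_has_derivative:
  "((\<lambda>t. J_partial a (y(j := t))) has_vector_derivative J_partial (j # a) y) (at (y j))"
proof (cases "a = []")
  case True
  then show ?thesis using J_has_derivative by (simp add: J_partial_def)
next
  case a: False
  show ?thesis
  proof (cases "j = hd a \<and> (\<forall>i\<in>set a. i = hd a)")
    case True
    then show ?thesis using a J_coord_deriv_has_derivative[of "hd a"] by (simp add: J_partial_def)
  next
    case False
    then have "J_partial a (y(j := t)) = J_partial a y" for t
      using a by (cases "\<forall>i\<in>set a. i = hd a") (auto simp: J_partial_def J_coord_deriv_def)
    moreover have "\<not> (\<forall>i\<in>set (j # a). i = hd (j # a))"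
      using False all_eq_hd_Cons_iff[OF a] by blast
    then have "J_partial (j # a) y = 0" by (auto simp: J_partial_def)
    ultimately show ?thesis by simp
  qed
qed

lemma ypartl_J: "ypartl a J = J_partial a"
proof (induction a)
  case (Cons j a)
  then show ?case by (auto simp: fun_eq_iff intro!: ypart_eqI J_partial_has_derivative)
qed (simp add: J_partial_def fun_eq_iff)

lemma Jinv_left: "Jinv y ** J y = mat 1" and Jinv_right: "J y ** Jinv y = mat 1"
proof -
  have "v = 0" if "J y *v v = 0" for v
    using J_lower[of v y] \<sigma>_pos that by (auto simp: mult_le_0_iff)
  then have "invertible (J y)"
    using matrix_left_invertible_ker invertible_left_inverse by metis
  then have "\<exists>A'. J y ** A' = mat 1 \<and> A' ** J y = mat 1"
    unfolding invertible_def .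
  then have "J y ** Jinv y = mat 1 \<and> Jinv y ** J y = mat 1"
    unfolding Jinv_def matrix_inv_def by (rule someI_ex)
  then show "Jinv y ** J y = mat 1" "J y ** Jinv y = mat 1" by auto
qed

lemma spec_norm_Jinv_le: "spec_norm (Jinv y) \<le> 1 / \<sigma>"
proof (rule spec_norm_le)
  fix v :: "real^'n"
  have "\<sigma> * norm (Jinv y *v v) \<le> norm (J y *v (Jinv y *v v))" by (rule J_lower)
  also have "J y *v (Jinv y *v v) = v" by (simp add: matrix_vector_mul_assoc Jinv_right)
  finally show "norm (Jinv y *v v) \<le> 1 / \<sigma> * norm v" using \<sigma>_pos by (simp add: field_simps)
qed

lemma Jinv_upd_diff:
  "Jinv (y(j := t)) - Jinv y =
     - ((sin (2 * pi * t) - sin (2 * pi * y j)) / sqrt 6) *\<^sub>R (Jinv (y(j := t)) ** (M j ** Jinv y))"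
proof -
  define s where "s = (sin (2 * pi * t) - sin (2 * pi * y j)) / sqrt 6"
  define Kt where "Kt = Jinv (y(j := t))"
  have "Jinv y = (Kt ** J (y(j := t))) ** Jinv y"
    by (simp add: Kt_def Jinv_left)
  also have "\<dots> = Kt ** (J (y(j := t)) ** Jinv y)"
    by (simp add: matrix_mul_assoc)
  also have "J (y(j := t)) ** Jinv y = mat 1 + s *\<^sub>R (M j ** Jinv y)"
    unfolding J_upd s_def by (simp add: matrix_add_rdistrib scalar_matrix_assoc[symmetric] Jinv_right)
  also have "Kt ** (mat 1 + s *\<^sub>R (M j ** Jinv y)) = Kt + s *\<^sub>R (Kt ** (M j ** Jinv y))"
    by (simp add: matrix_add_ldistrib matrix_mult_scaleR_right)
  finally have "Jinv y = Kt + s *\<^sub>R (Kt ** (M j ** Jinv y))" .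
  then show ?thesis unfolding s_def[symmetric] Kt_def[symmetric] by (simp add: algebra_simps)
qed

lemma Jinv_continuous: "isCont (\<lambda>t. Jinv (y(j := t))) (y j)"
proof -
  define s where "s t = (sin (2 * pi * t) - sin (2 * pi * y j)) / sqrt 6" for t
  define C where "C = real CARD('n) * (1 / \<sigma> * (spec_norm (M j) * (1 / \<sigma>)))"
  have bound: "norm (Jinv (y(j := t)) - Jinv y) \<le> \<bar>s t\<bar> * C" for t
  proof -
    have "norm (Jinv (y(j := t)) ** (M j ** Jinv y))
        \<le> real CARD('n) * spec_norm (Jinv (y(j := t)) ** (M j ** Jinv y))"
      by (rule norm_le_card_spec_norm)
    also have "\<dots> \<le> real CARD('n) * (spec_norm (Jinv (y(j := t))) * (spec_norm (M j) * spec_norm (Jinv y)))"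
      by (intro mult_left_mono order_trans[OF spec_norm_mult_le] mult_left_mono spec_norm_mult_le
          spec_norm_nonneg) simp
    also have "\<dots> \<le> C"
      unfolding C_def using \<sigma>_pos
      by (intro mult_left_mono mult_mono spec_norm_Jinv_le mult_nonneg_nonneg spec_norm_nonneg) auto
    finally show ?thesis
      unfolding Jinv_upd_diff s_def by (simp add: mult_left_mono divide_right_mono)
  qed
  have "((\<lambda>t. \<bar>s t\<bar> * C) \<longlongrightarrow> \<bar>s (y j)\<bar> * C) (at (y j))"
    unfolding s_def by (intro tendsto_intros) simp_all
  then have "((\<lambda>t. \<bar>s t\<bar> * C) \<longlongrightarrow> 0) (at (y j))" by (simp add: s_def)
  then have "((\<lambda>t. Jinv (y(j := t)) - Jinv y) \<longlongrightarrow> 0) (at (y j))"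
    by (rule Lim_null_comparison[rotated]) (auto intro: always_eventually bound)
  then show ?thesis unfolding isCont_def by (simp add: LIM_zero_iff)
qed

lemma Jinv_has_derivative:
  "((\<lambda>t. Jinv (y(j := t))) has_vector_derivative - (Jinv y ** (J_coord_deriv j 1 y ** Jinv y))) (at (y j))"
proof -
  define s where "s t = (sin (2 * pi * t) - sin (2 * pi * y j)) / sqrt 6" for t
  have "(s has_real_derivative 2 * pi * cos (2 * pi * y j) / sqrt 6) (at (y j))"
    unfolding s_def by (auto intro!: derivative_eq_intros simp: field_simps)
  then obtain q where q: "\<forall>z. s z - s (y j) = q z * (z - y j)" "continuous (at (y j)) q"
    and q_yj: "q (y j) = 2 * pi * cos (2 * pi * y j) / sqrt 6"
    using DERIV_caratheodory_within[of s _ "y j" UNIV] by auto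
  define g where "g z = - q z *\<^sub>R (Jinv (y(j := z)) ** (M j ** Jinv y))" for z
  have "Jinv (y(j := z)) - Jinv (y(j := y j)) = (z - y j) *\<^sub>R g z" for z
    using Jinv_upd_diff[of y j z] q(1) by (simp add: s_def g_def del: real_sqrt_eq_zero_cancel_iff)
  moreover have "isCont g (y j)"
    unfolding g_def using q(2) Jinv_continuous
    by (intro continuous_intros bounded_bilinear.isCont[OF bounded_bilinear_matrix_mult]) auto
  ultimately have "((\<lambda>t. Jinv (y(j := t))) has_vector_derivative g (y j)) (at (y j))"
    by (rule has_vector_derivative_continuous_slope)
  moreover have "J_coord_deriv j 1 y = (2 * pi * cos (2 * pi * y j) / sqrt 6) *\<^sub>R M j"
    using sin_add_pi_half by (simp add: J_coord_deriv_def)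
  ultimately show ?thesis
    by (simp add: g_def q_yj scalar_matrix_assoc[symmetric] matrix_mult_scaleR_right)
qed

text \<open>Closed under partial differentiation; only needed to see that Jinv is smooth in every
  coordinate.\<close>

inductive_set Jinv_algebra :: "((nat \<Rightarrow> real) \<Rightarrow> real^'n^'n) set" where
  Jinv: "Jinv \<in> Jinv_algebra"
| J: "J \<in> Jinv_algebra"
| J_coord_deriv: "J_coord_deriv j k \<in> Jinv_algebra"
| zero: "(\<lambda>y. 0) \<in> Jinv_algebra"
| mult: "F \<in> Jinv_algebra \<Longrightarrow> H \<in> Jinv_algebra \<Longrightarrow> (\<lambda>y. F y ** H y) \<in> Jinv_algebra"
| add: "F \<in> Jinv_algebra \<Longrightarrow> H \<in> Jinv_algebra \<Longrightarrow> (\<lambda>y. F y + H y) \<in> Jinv_algebra"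
| uminus: "F \<in> Jinv_algebra \<Longrightarrow> (\<lambda>y. - F y) \<in> Jinv_algebra"

lemma Jinv_algebra_has_derivative:
  "F \<in> Jinv_algebra \<Longrightarrow>
     \<exists>F'\<in>Jinv_algebra. \<forall>y. ((\<lambda>t. F (y(j := t))) has_vector_derivative F' y) (at (y j))"
proof (induction rule: Jinv_algebra.induct)
  case Jinv
  have "(\<lambda>y. - (Jinv y ** (J_coord_deriv j 1 y ** Jinv y))) \<in> Jinv_algebra"
    by (intro Jinv_algebra.intros)
  then show ?case by (rule bexI[rotated]) (use Jinv_has_derivative in blast)
next
  case J
  show ?case
    by (rule bexI[rotated, OF Jinv_algebra.J_coord_deriv]) (use J_has_derivative in blast)
next
  case (J_coord_deriv i k)
  have deriv: "((\<lambda>t. J_coord_deriv i k (y(j := t))) has_vector_derivative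
      (if i = j then J_coord_deriv j (Suc k) y else 0)) (at (y j))" for y
    using J_coord_deriv_has_derivative by (auto simp: J_coord_deriv_def)
  have "(\<lambda>y. if i = j then J_coord_deriv j (Suc k) y else 0) \<in> Jinv_algebra"
    by (cases "i = j") (simp_all add: Jinv_algebra.J_coord_deriv Jinv_algebra.zero)
  then show ?case by (rule bexI[rotated]) (use deriv in blast)
next
  case zero
  show ?case by (rule bexI[rotated, OF Jinv_algebra.zero]) simp
next
  case (mult F H)
  then obtain F' H' where F': "F' \<in> Jinv_algebra"
      "\<And>y. ((\<lambda>t. F (y(j := t))) has_vector_derivative F' y) (at (y j))"
    and H': "H' \<in> Jinv_algebra" "\<And>y. ((\<lambda>t. H (y(j := t))) has_vector_derivative H' y) (at (y j))"
    by blast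
  have deriv: "((\<lambda>t. F (y(j := t)) ** H (y(j := t))) has_vector_derivative F y ** H' y + F' y ** H y)
      (at (y j))" for y
    using bounded_bilinear.has_vector_derivative[OF bounded_bilinear_matrix_mult F'(2)[of y] H'(2)[of y]]
    by simp
  have "(\<lambda>y. F y ** H' y + F' y ** H y) \<in> Jinv_algebra"
    by (intro Jinv_algebra.add Jinv_algebra.mult) (simp_all add: mult.hyps F'(1) H'(1))
  then show ?case by (rule bexI[rotated]) (use deriv in blast)
next
  case (add F H)
  then obtain F' H' where F': "F' \<in> Jinv_algebra"
      "\<And>y. ((\<lambda>t. F (y(j := t))) has_vector_derivative F' y) (at (y j))"
    and H': "H' \<in> Jinv_algebra" "\<And>y. ((\<lambda>t. H (y(j := t))) has_vector_derivative H' y) (at (y j))"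
    by blast
  have deriv: "((\<lambda>t. F (y(j := t)) + H (y(j := t))) has_vector_derivative F' y + H' y) (at (y j))" for y
    by (rule has_vector_derivative_add[OF F'(2) H'(2)])
  show ?case by (rule bexI[rotated, OF Jinv_algebra.add[OF F'(1) H'(1)]]) (use deriv in blast)
next
  case (uminus F)
  then obtain F' where F': "F' \<in> Jinv_algebra"
    "\<And>y. ((\<lambda>t. F (y(j := t))) has_vector_derivative F' y) (at (y j))"
    by blast
  have deriv: "((\<lambda>t. - F (y(j := t))) has_vector_derivative - F' y) (at (y j))" for y
    by (rule has_vector_derivative_minus[OF F'(2)])
  show ?case by (rule bexI[rotated, OF Jinv_algebra.uminus[OF F'(1)]]) (use deriv in blast)
qed

lemma ypartl_Jinv_algebra: "F \<in> Jinv_algebra \<Longrightarrow> ypartl js F \<in> Jinv_algebra"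
proof (induction js)
  case (Cons j js)
  then obtain F' where "F' \<in> Jinv_algebra"
    and "\<And>y. ((\<lambda>t. ypartl js F (y(j := t))) has_vector_derivative F' y) (at (y j))"
    using Jinv_algebra_has_derivative by blast
  moreover from this(2) have "ypartl (j # js) F = F'"
    by (auto simp: fun_eq_iff intro: ypart_eqI)
  ultimately show ?case by simp
qed simp

lemma coord_smooth_Jinv_algebra: "F \<in> Jinv_algebra \<Longrightarrow> coord_smooth UNIV I F"
  unfolding coord_smooth_def
  using Jinv_algebra_has_derivative[OF ypartl_Jinv_algebra] by (blast intro: differentiableI_vector)

lemma ypartl_Jinv_recursion:
  assumes js: "js \<noteq> []" and r: "subseq_splits js = ([], js) # r"
  shows "ypartl js Jinv y = - (Jinv y ** (\<Sum>p\<leftarrow>r. J_partial (fst p) y ** ypartl (snd p) Jinv y))"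
    (is "_ = - (Jinv y ** ?S)")
proof -
  have "0 = ypartl js (\<lambda>y. J y ** Jinv y) y"
    by (simp add: Jinv_right ypartl_const[OF js])
  also have "\<dots> = (\<Sum>p\<leftarrow>subseq_splits js. ypartl (fst p) J y ** ypartl (snd p) Jinv y)"
    by (rule ypartl_bilinear[OF bounded_bilinear_matrix_mult coord_open_UNIV
          coord_smooth_Jinv_algebra[OF Jinv_algebra.J] coord_smooth_Jinv_algebra[OF Jinv_algebra.Jinv]
          order_refl UNIV_I])
  also have "\<dots> = J y ** ypartl js Jinv y + ?S"
    by (simp add: r ypartl_J J_partial_def[of "[]"])
  finally have "J y ** ypartl js Jinv y = - ?S"
    by (simp add: eq_neg_iff_add_eq_0)
  then have "Jinv y ** (J y ** ypartl js Jinv y) = (-1) *\<^sub>R (Jinv y ** ?S)"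
    by (simp add: matrix_mult_scaleR_right[symmetric])
  then show ?thesis
    by (simp add: matrix_mul_assoc Jinv_left)
qed

end

section \<open>Comparison with the majorant\<close>

locale majorised_jacobian = scalar_majorant I b "2 * pi" \<sigma> + sine_jacobian M J \<sigma> for I b \<sigma> M J +
  assumes spec_norm_M_le: "\<And>j. j \<in> I \<Longrightarrow> spec_norm (M j) / sqrt 6 \<le> b j"
begin

lemma spec_norm_J_partial_le:
  assumes "a \<noteq> []" and "set a \<subseteq> I"
  shows "spec_norm (J_partial a y) \<le> - denom_partial a (\<lambda>i. 0)"
proof (cases "\<forall>i\<in>set a. i = hd a")
  case True
  have "hd a \<in> I" using assms by auto
  have "spec_norm (J_partial a y) = (2 * pi) ^ length a *
      \<bar>sin (2 * pi * y (hd a) + real (length a) * pi / 2)\<bar> * (spec_norm (M (hd a)) / sqrt 6)"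
    using assms True by (simp add: J_partial_def J_coord_deriv_def spec_norm_scaleR abs_mult)
  also have "\<dots> \<le> (2 * pi) ^ length a * 1 * b (hd a)"
    using \<open>hd a \<in> I\<close> by (intro mult_mono spec_norm_M_le abs_sin_le_one) (auto simp: spec_norm_nonneg)
  finally show ?thesis using assms True by (simp add: denom_partial_def)
qed (use assms in \<open>auto simp: J_partial_def denom_partial_def spec_norm_zero\<close>)

lemma ypartl_Phi_nonneg: "set a \<subseteq> I \<Longrightarrow> 0 \<le> ypartl a \<Phi> (\<lambda>i. 0)"
  using ypartl_Phi_pow_nonneg[of a 1] by simp

lemma spec_norm_ypartl_Jinv_le: "set js \<subseteq> I \<Longrightarrow> spec_norm (ypartl js Jinv y) \<le> ypartl js \<Phi> (\<lambda>i. 0)"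
proof (induction "length js" arbitrary: js rule: less_induct)
  case less
  show ?case
  proof (cases "js = []")
    case True
    then show ?thesis using spec_norm_Jinv_le[of y] by (simp add: \<Phi>_def w_0)
  next
    case False
    obtain r where r: "subseq_splits js = ([], js) # r" "\<forall>p\<in>set r. fst p \<noteq> []"
      using subseq_splits_trivial_first by blast
    have term_le: "spec_norm (J_partial (fst p) y ** ypartl (snd p) Jinv y)
        \<le> - denom_partial (fst p) (\<lambda>i. 0) * ypartl (snd p) \<Phi> (\<lambda>i. 0)" if p: "p \<in> set r" for p
    proof -
      have len: "length (fst p) + length (snd p) = length js"
        and fst: "set (fst p) \<subseteq> I" and snd: "set (snd p) \<subseteq> I"
        using subseq_splits_length_set[of p js] p r(1) less.prems by auto
      have "fst p \<noteq> []" using p r(2) by blast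
      then have "length (snd p) < length js" using len by (cases "fst p") auto
      have J_le: "spec_norm (J_partial (fst p) y) \<le> - denom_partial (fst p) (\<lambda>i. 0)"
        by (rule spec_norm_J_partial_le[OF \<open>fst p \<noteq> []\<close> fst])
      have "spec_norm (J_partial (fst p) y ** ypartl (snd p) Jinv y)
          \<le> spec_norm (J_partial (fst p) y) * spec_norm (ypartl (snd p) Jinv y)"
        by (rule spec_norm_mult_le)
      also have "\<dots> \<le> - denom_partial (fst p) (\<lambda>i. 0) * ypartl (snd p) \<Phi> (\<lambda>i. 0)"
        by (rule mult_mono[OF J_le less.hyps[OF \<open>length (snd p) < length js\<close> snd]
              order_trans[OF spec_norm_nonneg J_le] spec_norm_nonneg])
      finally show ?thesis .
    qed
    have "spec_norm (ypartl js Jinv y) \<le>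
        spec_norm (Jinv y) * spec_norm (\<Sum>p\<leftarrow>r. J_partial (fst p) y ** ypartl (snd p) Jinv y)"
      unfolding ypartl_Jinv_recursion[OF False r(1)] spec_norm_uminus by (rule spec_norm_mult_le)
    also have "\<dots> \<le> 1 / \<sigma> * (\<Sum>p\<leftarrow>r. - denom_partial (fst p) (\<lambda>i. 0) * ypartl (snd p) \<Phi> (\<lambda>i. 0))"
      using \<sigma>_pos
      by (intro mult_mono spec_norm_Jinv_le order_trans[OF spec_norm_sum_list_le] sum_list_mono term_le
          spec_norm_nonneg) auto
    also have "\<dots> = ypartl js \<Phi> (\<lambda>i. 0)"
      using ypartl_Phi_recursion[OF less.prems False r(1)] \<sigma>_pos by (simp add: field_simps)
    finally show ?thesis .
  qed
qed

lemma spec_norm_ypartl_gram_inv_le: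
  assumes js: "set js \<subseteq> I"
  shows "spec_norm (ypartl js (\<lambda>y. Jinv y ** transpose (Jinv y)) y) \<le> ypartl js (\<lambda>y. \<Phi> y ^ 2) (\<lambda>i. 0)"
proof -
  have Leibniz: "ypartl js (\<lambda>y. Jinv y ** transpose (Jinv y)) y =
      (\<Sum>p\<leftarrow>subseq_splits js. ypartl (fst p) Jinv y ** transpose (ypartl (snd p) Jinv y))"
    by (rule ypartl_bilinear[OF bounded_bilinear_matrix_mult_transpose coord_open_UNIV
          coord_smooth_Jinv_algebra[OF Jinv_algebra.Jinv] coord_smooth_Jinv_algebra[OF Jinv_algebra.Jinv]
          js UNIV_I])
  have "spec_norm (ypartl js (\<lambda>y. Jinv y ** transpose (Jinv y)) y) \<le>
      (\<Sum>p\<leftarrow>subseq_splits js. ypartl (fst p) \<Phi> (\<lambda>i. 0) * ypartl (snd p) \<Phi> (\<lambda>i. 0))"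
    unfolding Leibniz
  proof (rule order_trans[OF spec_norm_sum_list_le sum_list_mono])
    fix p assume "p \<in> set (subseq_splits js)"
    then have "set (fst p) \<subseteq> I" "set (snd p) \<subseteq> I"
      using subseq_splits_length_set js by blast+
    have "spec_norm (ypartl (fst p) Jinv y ** transpose (ypartl (snd p) Jinv y))
        \<le> spec_norm (ypartl (fst p) Jinv y) * spec_norm (ypartl (snd p) Jinv y)"
      by (rule order_trans[OF spec_norm_mult_le mult_left_mono[OF spec_norm_transpose_le spec_norm_nonneg]])
    also have "\<dots> \<le> ypartl (fst p) \<Phi> (\<lambda>i. 0) * ypartl (snd p) \<Phi> (\<lambda>i. 0)"
      using \<open>set (fst p) \<subseteq> I\<close> \<open>set (snd p) \<subseteq> I\<close>
      by (intro mult_mono spec_norm_ypartl_Jinv_le ypartl_Phi_nonneg spec_norm_nonneg)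
    finally show "spec_norm (ypartl (fst p) Jinv y ** transpose (ypartl (snd p) Jinv y))
        \<le> ypartl (fst p) \<Phi> (\<lambda>i. 0) * ypartl (snd p) \<Phi> (\<lambda>i. 0)" .
  qed
  also have "\<dots> = ypartl js (\<lambda>y. \<Phi> y ^ 2) (\<lambda>i. 0)"
    by (rule ypartl_Phi_sq[OF js, symmetric])
  finally show ?thesis .
qed

end

lemma count_list_ymderiv_list:
  "finite (mi_supp \<nu>) \<Longrightarrow>
     count_list (concat (map (\<lambda>j. replicate (\<nu> j) j) (sorted_list_of_set (mi_supp \<nu>)))) = \<nu>"
proof -
  have "count_list (concat (map (\<lambda>j. replicate (\<nu> j) j) L)) i = (if i \<in> set L then \<nu> i else 0)"
    if "distinct L" for L i
  proof -
    have "count_list (replicate n j) i = (if i = j then n else 0)" for n j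
      by (induction n) auto
    then show ?thesis using that by (induction L) (auto simp: count_list_0_iff)
  qed
  moreover assume "finite (mi_supp \<nu>)"
  ultimately show ?thesis
    by (auto simp: fun_eq_iff mi_supp_def)
qed

lemma mi_abs_eq_sum_mi_supp:
  assumes "finite (mi_supp \<nu>)" and "m \<in> multi_indices_le \<nu>"
  shows "mi_abs m = (\<Sum>i\<in>mi_supp \<nu>. m i)"
proof -
  have "mi_supp m \<subseteq> mi_supp \<nu>"
    using assms(2) by (auto simp: multi_indices_le_def mi_supp_def) (meson less_le_trans)
  then show ?thesis
    unfolding mi_abs_def by (intro sum.mono_neutral_left assms(1)) (auto simp: mi_supp_def)
qed

lemma spec_norm_ymderiv_inverse_Bmat_le:
  fixes \<psi> :: "nat \<Rightarrow> real^'n \<Rightarrow> real^'n" and x :: "real^'n" and b :: "nat \<Rightarrow> real"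
  assumes \<sigma>: "0 < \<sigma>" "\<sigma> \<le> 1"
    and lower: "\<And>y v. \<sigma> * norm v \<le> norm (Jmat \<psi> x y *v v)"
    and summable_jacobian: "summable (\<lambda>i. norm (jacobian (\<psi> i) x))"
    and b: "\<And>i. 0 \<le> b i" "summable b" "\<And>i. spec_norm (jacobian (\<psi> i) x) / sqrt 6 \<le> b i"
    and \<nu>: "finite (mi_supp \<nu>)"
  shows "spec_norm (ymderiv \<nu> (\<lambda>y'. matrix_inv (Bmat \<psi> x y')) y)
    \<le> 1 / \<sigma>^2 * (4 * pi * (1 + (\<Sum>i. b i)) / \<sigma>^2) ^ mi_abs \<nu> *
       (\<Sum>m\<in>{m. \<forall>j. m j \<le> \<nu> j}. fact (mi_abs m) * a_seq (mi_abs m) *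
          (\<Prod>j\<in>mi_supp \<nu>. fact (m j) * b j ^ m j * real (Stirling (\<nu> j) (m j))))"
proof -
  interpret majorised_jacobian "mi_supp \<nu>" b \<sigma> "\<lambda>i. jacobian (\<psi> i) x" "Jmat \<psi> x"
    by unfold_locales (use \<sigma> lower summable_jacobian b \<nu> in \<open>auto simp: Jmat_def\<close>)
  define js where "js = concat (map (\<lambda>j. replicate (\<nu> j) j) (sorted_list_of_set (mi_supp \<nu>)))"
  have js: "set js \<subseteq> mi_supp \<nu>" and count: "count_list js = \<nu>"
    using \<nu> count_list_ymderiv_list[OF \<nu>] by (auto simp: js_def)
  have supp: "\<forall>i. i \<notin> mi_supp \<nu> \<longrightarrow> \<nu> i = 0" by (simp add: mi_supp_def)
  have "matrix_inv (Bmat \<psi> x y') = Jinv y' ** transpose (Jinv y')" for y'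
    unfolding Bmat_def by (rule matrix_inv_gram[OF Jinv_right Jinv_left])
  then have "ymderiv \<nu> (\<lambda>y'. matrix_inv (Bmat \<psi> x y')) = ypartl js (\<lambda>y'. Jinv y' ** transpose (Jinv y'))"
    by (simp add: ymderiv_def js_def)
  then have "spec_norm (ymderiv \<nu> (\<lambda>y'. matrix_inv (Bmat \<psi> x y')) y) \<le> Phi_pow_formula 2 \<nu> (\<lambda>i. 0)"
    using spec_norm_ypartl_gram_inv_le[OF js, of y] by (simp add: ypartl_Phi_pow[OF js zero_in_\<Omega>] count)
  also have "\<dots> \<le> 1 / \<sigma>^2 * (2 * (2 * pi) * (1 + (\<Sum>i. b i)) / \<sigma>^2) ^ (\<Sum>i\<in>mi_supp \<nu>. \<nu> i) *
      (\<Sum>m\<in>multi_indices_le \<nu>. fact (msize m) * a_seq (msize m) *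
         (\<Prod>j\<in>mi_supp \<nu>. fact (m j) * b j ^ m j * real (Stirling (\<nu> j) (m j))))"
    by (rule Phi_sq_formula_at_0_le[OF \<sigma>(2) suminf_nonneg[OF b(2,1)] supp])
  also have "\<dots> = 1 / \<sigma>^2 * (4 * pi * (1 + (\<Sum>i. b i)) / \<sigma>^2) ^ mi_abs \<nu> *
       (\<Sum>m\<in>{m. \<forall>j. m j \<le> \<nu> j}. fact (mi_abs m) * a_seq (mi_abs m) *
          (\<Prod>j\<in>mi_supp \<nu>. fact (m j) * b j ^ m j * real (Stirling (\<nu> j) (m j))))"
  proof -
    have "mi_abs m = msize m" if "m \<in> multi_indices_le \<nu>" for m
      using mi_abs_eq_sum_mi_supp[OF \<nu> that] by (simp add: msize_def)
    moreover have "2 * (2 * pi) = 4 * pi" by simp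
    ultimately show ?thesis
      by (simp add: mi_abs_def[of \<nu>] multi_indices_le_def[symmetric] cong: sum.cong)
  qed
  finally show ?thesis .
qed

lemma sin_two_pi_frac: "sin (2 * pi * frac t) = sin (2 * pi * t)"
proof -
  have "2 * pi * frac t = 2 * pi * t - 2 * pi * of_int \<lfloor>t\<rfloor>"
    by (simp add: frac_def algebra_simps)
  then show ?thesis by (simp add: sin_diff)
qed

text \<open>J is 1-periodic in each parameter, so (A3), stated on the cube, bounds the singular values
  for all real parameters; this is needed for partial derivatives on the faces of the cube.\<close>

lemma Jmat_frac: "Jmat \<psi> x (\<lambda>i. frac (y i)) = Jmat \<psi> x y"
  by (simp add: Jmat_def sin_two_pi_frac)

lemma frac_in_Ucube: "(\<lambda>i. frac (y i)) \<in> Ucube"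
  by (auto simp: Ucube_def frac_ge_0 less_imp_le[OF frac_lt_1])

lemma spec_norm_jacobian_le_W1inf_norm:
  assumes "x \<in> D" and "bdd_above ((\<lambda>x. spec_norm (jacobian f x)) ` D)"
  shows "spec_norm (jacobian f x) \<le> W1inf_norm D f"
  using cSUP_upper[OF assms] by (simp add: W1inf_norm_def le_max_iff_disj)

text \<open>The bound holds pointwise in x and uses only the lower singular value bound of (A3) and
  the summability (A4).\<close>

theorem lemma3p1:
  fixes Dref :: "(real^'n) set"
    and \<psi> :: "nat \<Rightarrow> real^'n \<Rightarrow> real^'n"
    and \<sigma>min \<sigma>max :: real
    and y :: "nat \<Rightarrow> real"
    and \<nu> :: "nat \<Rightarrow> nat"
  assumes dim: "CARD('n) \<in> {2, 3}"
    and dom: "lipschitz_domain Dref"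
    and A1: "\<forall>y \<in> Ucube. inj_on (\<lambda>x. Vmap \<psi> x y) (closure Dref) \<and>
                         C2_closure Dref (\<lambda>x. Vmap \<psi> x y)"
    and A2: "\<exists>C > 0. \<forall>y \<in> Ucube. C2_norm_le Dref (\<lambda>x. Vmap \<psi> x y) C \<and>
               C2_closure ((\<lambda>x. Vmap \<psi> x y) ` Dref) (inv_into (closure Dref) (\<lambda>x. Vmap \<psi> x y)) \<and>
               C2_norm_le ((\<lambda>x. Vmap \<psi> x y) ` Dref) (inv_into (closure Dref) (\<lambda>x. Vmap \<psi> x y)) C"
    and A3: "0 < \<sigma>min" "\<sigma>min \<le> 1" "1 \<le> \<sigma>max"
            "\<forall>x \<in> Dref. \<forall>y \<in> Ucube. \<forall>s. singular_value (Jmat \<psi> x y) s \<longrightarrow> s \<in> {\<sigma>min..\<sigma>max}"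
    and A4: "\<forall>i. bdd_above ((\<lambda>x. norm (\<psi> i x)) ` Dref) \<and>
                 bdd_above ((\<lambda>x. spec_norm (jacobian (\<psi> i) x)) ` Dref)"
            "summable (\<lambda>i. W1inf_norm Dref (\<psi> i))"
    and y: "y \<in> Ucube"
    and nu: "finite (mi_supp \<nu>)"
  shows "\<forall>x \<in> Dref.
     spec_norm (ymderiv \<nu> (\<lambda>y'. matrix_inv (Bmat \<psi> x y')) y)
       \<le> (let b = (\<lambda>i. W1inf_norm Dref (\<psi> i) / sqrt 6); \<xi> = (\<Sum>i. b i) in
          1 / \<sigma>min^2 * (4 * pi * (1 + \<xi>) / \<sigma>min^2) ^ mi_abs \<nu> *
          (\<Sum>m \<in> {m. \<forall>j. m j \<le> \<nu> j}.
             fact (mi_abs m) * a_seq (mi_abs m) *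
             (\<Prod>j\<in>mi_supp \<nu>. fact (m j) * b j ^ m j * real (Stirling (\<nu> j) (m j)))))"
proof (intro ballI, unfold Let_def, rule spec_norm_ymderiv_inverse_Bmat_le[OF A3(1,2) _ _ _ _ _ nu,
    where b = "\<lambda>i. W1inf_norm Dref (\<psi> i) / sqrt 6"])
  fix x assume x: "x \<in> Dref"
  have jacobian_le: "spec_norm (jacobian (\<psi> i) x) \<le> W1inf_norm Dref (\<psi> i)" for i
    by (rule spec_norm_jacobian_le_W1inf_norm[OF x conjunct2[OF spec[OF A4(1)]]])
  show "spec_norm (jacobian (\<psi> i) x) / sqrt 6 \<le> W1inf_norm Dref (\<psi> i) / sqrt 6" for i
    by (rule divide_right_mono[OF jacobian_le]) simp
  show "0 \<le> W1inf_norm Dref (\<psi> i) / sqrt 6" for i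
    using order_trans[OF spec_norm_nonneg jacobian_le] by simp
  show "summable (\<lambda>i. W1inf_norm Dref (\<psi> i) / sqrt 6)"
    by (rule summable_divide[OF A4(2)])
  show "summable (\<lambda>i. norm (jacobian (\<psi> i) x))"
  proof (rule summable_comparison_test'[OF summable_mult[OF A4(2), of "real CARD('n)"]])
    show "norm (norm (jacobian (\<psi> i) x)) \<le> real CARD('n) * W1inf_norm Dref (\<psi> i)" for i
      using order_trans[OF norm_le_card_spec_norm mult_left_mono[OF jacobian_le]] by simp
  qed
  show "\<sigma>min * norm v \<le> norm (Jmat \<psi> x y' *v v)" for y' v
  proof (rule singular_value_lower_bound)
    fix s assume "singular_value (Jmat \<psi> x y') s"
    then have "singular_value (Jmat \<psi> x (\<lambda>i. frac (y' i))) s" by (simp only: Jmat_frac)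
    then have "s \<in> {\<sigma>min..\<sigma>max}" using A3(4) x frac_in_Ucube by blast
    then show "\<sigma>min \<le> s" by simp
  qed (use A3(1) in simp)
qed

end
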